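(* For every $n\ge 3$, the Q-graph $\mathcal Q(C_n)$ of the cycle $C_n$ on $n$ vertices does not have Laplacian perfect pair state transfer between any two distinct pair states.
   Context: The Q-graph $\mathcal Q(G)$ is obtained from $G$ by inserting a new vertex into each edge of $G$ and joining by an edge each pair of new vertices lying on adjacent edges of $G$. For a simple graph $H$ with Laplacian $L_H=D_H-A_H$ and characteristic vectors $\mathbf e_u$ of vertices, a pair state is $\mathbf e_a-\mathbf e_b$ for distinct vertices $a,b$. $H$ has Laplacian perfect pair state transfer between distinct pair states $\mathbf e_a-\mathbf e_b$ and $\mathbf e_c-\mathbf e_d$ if there exist $\tau\in\mathbb R$ and $\chi\in\mathbb C$ with $|\chi|=1$ such that $\exp(-\mathrm i\tau L_H)(\mathbf e_a-\mathbf e_b)=\chi(\mathbf e_c-\mathbf e_d)$. *)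

theory Defs
  imports Complex_Main
begin

(* A simple graph is given by a finite vertex set V and a symmetric irreflexive
   adjacency relation A (only its restriction to V matters). *)

definition graph_edges :: "'a set \<Rightarrow> ('a \<Rightarrow> 'a \<Rightarrow> bool) \<Rightarrow> 'a set set" where
  "graph_edges V A = {{u, v} | u v. u \<in> V \<and> v \<in> V \<and> A u v}"

(* Q-graph: original vertices Inl u, one new vertex Inr e per edge e;
   u ~ e iff u lies on e; e ~ f iff e, f are distinct adjacent edges. *)
definition Q_verts :: "'a set \<Rightarrow> ('a \<Rightarrow> 'a \<Rightarrow> bool) \<Rightarrow> ('a + 'a set) set" where
  "Q_verts V A = Inl ` V \<union> Inr ` graph_edges V A"

fun Q_adj :: "('a + 'a set) \<Rightarrow> ('a + 'a set) \<Rightarrow> bool" where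
  "Q_adj (Inl u) (Inr e) = (u \<in> e)"
| "Q_adj (Inr e) (Inl u) = (u \<in> e)"
| "Q_adj (Inr e) (Inr f) = (e \<noteq> f \<and> e \<inter> f \<noteq> {})"
| "Q_adj (Inl u) (Inl v) = False"

definition cycle_adj :: "nat \<Rightarrow> nat \<Rightarrow> nat \<Rightarrow> bool" where
  "cycle_adj n i j = (j = (i + 1) mod n \<or> i = (j + 1) mod n)"

definition laplacian :: "'v set \<Rightarrow> ('v \<Rightarrow> 'v \<Rightarrow> bool) \<Rightarrow> 'v \<Rightarrow> 'v \<Rightarrow> complex" where
  "laplacian V A x y =
     (if x = y then of_nat (card {z \<in> V. A x z}) else 0) - (if A x y then 1 else 0)"

definition mat_vec :: "'v set \<Rightarrow> ('v \<Rightarrow> 'v \<Rightarrow> complex) \<Rightarrow> ('v \<Rightarrow> complex) \<Rightarrow> 'v \<Rightarrow> complex" where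
  "mat_vec V M f x = (\<Sum>y\<in>V. M x y * f y)"

definition exp_evolve :: "'v set \<Rightarrow> ('v \<Rightarrow> 'v \<Rightarrow> complex) \<Rightarrow> real \<Rightarrow> ('v \<Rightarrow> complex) \<Rightarrow> 'v \<Rightarrow> complex" where
  "exp_evolve V M t f x =
     (\<Sum>k. ((- \<i> * of_real t) ^ k / fact k) * ((mat_vec V M ^^ k) f) x)"

definition char_vec :: "'v \<Rightarrow> 'v \<Rightarrow> complex" where
  "char_vec a = (\<lambda>x. if x = a then 1 else 0)"

definition pair_state :: "'v \<Rightarrow> 'v \<Rightarrow> 'v \<Rightarrow> complex" where
  "pair_state a b = (\<lambda>x. char_vec a x - char_vec b x)"

definition lap_pair_PST :: "'v set \<Rightarrow> ('v \<Rightarrow> 'v \<Rightarrow> bool) \<Rightarrow> 'v \<Rightarrow> 'v \<Rightarrow> 'v \<Rightarrow> 'v \<Rightarrow> bool" where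
  "lap_pair_PST V A a b c d =
     (\<exists>\<tau>::real. \<exists>\<chi>::complex. cmod \<chi> = 1 \<and>
        (\<forall>x\<in>V. exp_evolve V (laplacian V A) \<tau> (pair_state a b) x = \<chi> * pair_state c d x))"

end

theory Submission
  imports Defs
begin

text \<open>If \<open>e\<^sub>a - e\<^sub>b\<close> evolves into \<open>\<chi> (e\<^sub>c - e\<^sub>d)\<close> at time \<open>\<tau>\<close>, then every real eigenvector \<open>u\<close>
  of the Laplacian, with eigenvalue \<open>\<theta>\<close>, satisfies \<open>\<chi> (u c - u d) = e\<^sup>-\<^sup>i\<^sup>\<tau>\<^sup>\<theta> (u a - u b)\<close>. If
  \<open>u a \<noteq> u b\<close>, comparing with the conjugate eigenvector gives \<open>e\<^sup>-\<^sup>2\<^sup>i\<^sup>\<tau>\<^sup>\<theta> = \<chi>\<^sup>2\<close>; hence the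
  eigenvalues in the support of \<open>e\<^sub>a - e\<^sub>b\<close> differ by integer multiples of \<open>\<pi>/\<tau>\<close>, and
  \<open>u c - u d = \<plusminus>(u a - u b)\<close> for every eigenvector.

  The Laplacian of \<open>\<Q>(C\<^sub>n)\<close> has the Bloch eigenvectors \<open>X w\<^sup>i\<close> on vertex \<open>i\<close> and \<open>Y w\<^sup>k\<close> on
  edge \<open>{k, k+1}\<close> (\<open>w\<^sup>n = 1\<close>), with eigenvalues \<open>3 - c \<plusminus> \<surd>(3 + c\<^sup>2)\<close> for
  \<open>c = cos (2\<pi>j/n)\<close>, and \<open>2, 4, 6\<close> from \<open>w = \<plusminus>1\<close>. Apart from a few pairs in \<open>\<Q>(C\<^sub>3)\<close> and
  \<open>\<Q>(C\<^sub>4)\<close>, the support of any pair state contains both eigenvalues for two different \<open>c\<close>, or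
  for one \<open>c\<close> together with a rational eigenvalue; commensurability then makes \<open>\<surd>(3 + c\<^sup>2)\<close>
  or \<open>\<surd>(3 + c\<^sup>2)/c\<close> rational, which a Niven-type argument on \<open>2 cos (2\<pi>k/n)\<close> rules out.
  In the exceptional pairs the sign condition, applied to the eigenvectors with \<open>j = 1\<close>, forces
  \<open>{c, d} = {a, b}\<close>.\<close>

section \<open>Transfer between pair states\<close>

lemma inner_mat_vec_power_eigenvector:
  assumes "finite V" and sym: "\<And>x y. x \<in> V \<Longrightarrow> y \<in> V \<Longrightarrow> M x y = M y x"
    and eig: "\<And>x. x \<in> V \<Longrightarrow> mat_vec V M u x = \<theta> * u x"
  shows "(\<Sum>x\<in>V. u x * (mat_vec V M ^^ k) f x) = \<theta> ^ k * (\<Sum>x\<in>V. u x * f x)"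
proof (induction k)
  case 0
  then show ?case by simp
next
  case (Suc k)
  define g where "g = (mat_vec V M ^^ k) f"
  have "(\<Sum>x\<in>V. u x * (mat_vec V M ^^ Suc k) f x) = (\<Sum>x\<in>V. u x * (\<Sum>y\<in>V. M x y * g y))"
    by (simp add: g_def mat_vec_def)
  also have "\<dots> = (\<Sum>y\<in>V. (\<Sum>x\<in>V. M y x * u x) * g y)"
    unfolding sum_distrib_left sum_distrib_right
    by (subst sum.swap) (auto intro!: sum.cong simp: sym mult_ac)
  also have "\<dots> = \<theta> * (\<Sum>y\<in>V. u y * g y)"
    using eig by (simp add: mat_vec_def sum_distrib_left mult_ac)
  finally show ?case
    using Suc by (simp add: g_def)
qed

lemma sum_norm_mat_vec_power_le:
  fixes M :: "'v \<Rightarrow> 'v \<Rightarrow> complex"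
  assumes fin: "finite V"
  shows "(\<Sum>x\<in>V. cmod ((mat_vec V M ^^ k) f x))
           \<le> (\<Sum>x\<in>V. \<Sum>y\<in>V. cmod (M x y)) ^ k * (\<Sum>x\<in>V. cmod (f x))"
proof (induction k)
  case 0
  then show ?case by simp
next
  case (Suc k)
  define B where "B = (\<Sum>x\<in>V. \<Sum>y\<in>V. cmod (M x y))"
  define g where "g = (mat_vec V M ^^ k) f"
  define N where "N = (\<Sum>x\<in>V. cmod (g x))"
  have g_le: "cmod (g y) \<le> N" if "y \<in> V" for y
    unfolding N_def using fin that by (intro member_le_sum) auto
  have "(\<Sum>x\<in>V. cmod ((mat_vec V M ^^ Suc k) f x)) = (\<Sum>x\<in>V. cmod (\<Sum>y\<in>V. M x y * g y))"
    by (simp add: g_def mat_vec_def)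
  also have "\<dots> \<le> (\<Sum>x\<in>V. \<Sum>y\<in>V. cmod (M x y) * N)"
  proof (rule sum_mono)
    fix x
    have "cmod (\<Sum>y\<in>V. M x y * g y) \<le> (\<Sum>y\<in>V. cmod (M x y * g y))"
      by (rule norm_sum)
    also have "\<dots> \<le> (\<Sum>y\<in>V. cmod (M x y) * N)"
      by (rule sum_mono) (auto simp: norm_mult intro: mult_left_mono g_le)
    finally show "cmod (\<Sum>y\<in>V. M x y * g y) \<le> (\<Sum>y\<in>V. cmod (M x y) * N)" .
  qed
  also have "\<dots> = B * N"
    by (simp add: B_def sum_distrib_right)
  also have "\<dots> \<le> B * (B ^ k * (\<Sum>x\<in>V. cmod (f x)))"
    using Suc by (auto simp: N_def g_def B_def intro!: mult_left_mono sum_nonneg)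
  finally show ?case
    by (simp add: B_def)
qed

lemma summable_exp_evolve_series:
  assumes fin: "finite V" and x: "x \<in> V"
  shows "summable (\<lambda>k. ((- \<i> * of_real t) ^ k / fact k) * ((mat_vec V M ^^ k) f) x)"
proof -
  define B where "B = (\<Sum>x\<in>V. \<Sum>y\<in>V. cmod (M x y))"
  define N where "N = (\<Sum>x\<in>V. cmod (f x))"
  have bound: "cmod ((mat_vec V M ^^ k) f x) \<le> B ^ k * N" for k
  proof -
    have "cmod ((mat_vec V M ^^ k) f x) \<le> (\<Sum>x\<in>V. cmod ((mat_vec V M ^^ k) f x))"
      using fin x by (intro member_le_sum) auto
    then show ?thesis
      using sum_norm_mat_vec_power_le[OF fin, where M=M and k=k and f=f] by (simp add: B_def N_def)
  qed
  have "summable (\<lambda>k. (\<bar>t\<bar> * B) ^ k / fact k * N)"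
    using summable_exp_generic[of "\<bar>t\<bar> * B"]
    by (intro summable_mult2) (simp add: divide_inverse mult.commute)
  then show ?thesis
  proof (rule summable_comparison_test')
    fix k :: nat
    have "norm ((- \<i> * of_real t) ^ k / fact k * (mat_vec V M ^^ k) f x)
          = \<bar>t\<bar> ^ k / fact k * cmod ((mat_vec V M ^^ k) f x)"
      by (simp add: norm_mult norm_divide norm_power)
    also have "\<dots> \<le> (\<bar>t\<bar> * B) ^ k / fact k * N"
      using mult_left_mono[OF bound[of k], of "\<bar>t\<bar> ^ k / fact k"]
      by (simp add: power_mult_distrib)
    finally show "norm ((- \<i> * of_real t) ^ k / fact k * (mat_vec V M ^^ k) f x)
                  \<le> (\<bar>t\<bar> * B) ^ k / fact k * N" .
  qed
qed

lemma inner_exp_evolve_eigenvector: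
  assumes fin: "finite V" and sym: "\<And>x y. x \<in> V \<Longrightarrow> y \<in> V \<Longrightarrow> M x y = M y x"
    and eig: "\<And>x. x \<in> V \<Longrightarrow> mat_vec V M u x = \<theta> * u x"
  shows "(\<Sum>x\<in>V. u x * exp_evolve V M t f x) = exp (- \<i> * of_real t * \<theta>) * (\<Sum>x\<in>V. u x * f x)"
proof -
  let ?T = "\<lambda>x k. ((- \<i> * of_real t) ^ k / fact k) * ((mat_vec V M ^^ k) f) x"
  have series_term: "(\<Sum>x\<in>V. u x * ?T x k) = (- \<i> * of_real t * \<theta>) ^ k / fact k * (\<Sum>x\<in>V. u x * f x)" for k
  proof -
    have "(\<Sum>x\<in>V. u x * ?T x k)
          = ((- \<i> * of_real t) ^ k / fact k) * (\<Sum>x\<in>V. u x * (mat_vec V M ^^ k) f x)"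
      by (simp add: sum_distrib_left mult_ac)
    moreover have "(- \<i> * of_real t * \<theta>) ^ k = (- \<i> * of_real t) ^ k * \<theta> ^ k"
      by (metis minus_mult_left power_mult_distrib)
    ultimately show ?thesis
      by (simp add: inner_mat_vec_power_eigenvector[OF fin sym eig])
  qed
  have "(\<Sum>x\<in>V. u x * exp_evolve V M t f x) = (\<Sum>x\<in>V. \<Sum>k. u x * ?T x k)"
    unfolding exp_evolve_def
    by (intro sum.cong refl suminf_mult[symmetric] summable_exp_evolve_series[OF fin])
  also have "\<dots> = (\<Sum>k. \<Sum>x\<in>V. u x * ?T x k)"
    by (rule suminf_sum[symmetric]) (intro summable_mult summable_exp_evolve_series[OF fin])
  also have "\<dots> = exp (- \<i> * of_real t * \<theta>) * (\<Sum>x\<in>V. u x * f x)"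
    unfolding series_term
  proof (rule sums_unique[symmetric], rule sums_mult2)
    show "(\<lambda>k. (- \<i> * of_real t * \<theta>) ^ k / fact k) sums exp (- \<i> * of_real t * \<theta>)"
      using exp_converges[of "- \<i> * of_real t * \<theta>"]
      by (simp add: scaleR_conv_of_real divide_inverse mult_ac)
  qed
  finally show ?thesis .
qed

lemma exp_evolve_0: "exp_evolve V M 0 f x = f x"
proof -
  have "exp_evolve V M 0 f x = (\<Sum>k\<in>{0}. ((- \<i> * of_real 0) ^ k / fact k) * ((mat_vec V M ^^ k) f) x)"
    unfolding exp_evolve_def by (rule suminf_finite) auto
  then show ?thesis by simp
qed

lemma mat_vec_cnj_eigenvector:
  assumes real: "\<And>x y. x \<in> V \<Longrightarrow> y \<in> V \<Longrightarrow> Im (M x y) = 0"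
    and eig: "mat_vec V M u x = of_real \<theta> * u x" and x: "x \<in> V"
  shows "mat_vec V M (\<lambda>y. cnj (u y)) x = of_real \<theta> * cnj (u x)"
proof -
  have "mat_vec V M (\<lambda>y. cnj (u y)) x = cnj (mat_vec V M u x)"
    unfolding mat_vec_def using real x by (simp add: complex_eq_iff)
  then show ?thesis
    using eig by simp
qed

lemma transfer_inner_eigenvector:
  fixes \<theta> \<tau> :: real
  assumes fin: "finite V" and sym: "\<And>x y. x \<in> V \<Longrightarrow> y \<in> V \<Longrightarrow> M x y = M y x"
    and eig: "\<And>x. x \<in> V \<Longrightarrow> mat_vec V M u x = of_real \<theta> * u x"
    and transfer: "\<And>x. x \<in> V \<Longrightarrow> exp_evolve V M \<tau> v x = \<chi> * w x"
  shows "\<chi> * (\<Sum>x\<in>V. u x * w x) = cis (- (\<tau> * \<theta>)) * (\<Sum>x\<in>V. u x * v x)"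
proof -
  have "\<chi> * (\<Sum>x\<in>V. u x * w x) = (\<Sum>x\<in>V. u x * exp_evolve V M \<tau> v x)"
    by (simp add: transfer sum_distrib_left mult_ac)
  also have "\<dots> = exp (- \<i> * of_real \<tau> * of_real \<theta>) * (\<Sum>x\<in>V. u x * v x)"
    by (rule inner_exp_evolve_eigenvector[OF fin sym eig])
  finally show ?thesis
    by (simp add: cis_conv_exp mult_ac)
qed

text \<open>Applied to \<open>u\<close> and to its conjugate (again an eigenvector, as \<open>M\<close> is real), the previous
  lemma gives \<open>\<chi> q = l p\<close> and \<open>\<chi> cnj q = l cnj p\<close> for the real vectors \<open>v\<close>, \<open>w\<close>. Conjugating the
  first and using \<open>|\<chi>| = |l| = 1\<close> turns it into \<open>l cnj q = \<chi> cnj p\<close>, whence \<open>l\<^sup>2 = \<chi>\<^sup>2\<close>.\<close>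

lemma transfer_phase_square:
  fixes \<theta> \<tau> :: real
  assumes fin: "finite V" and sym: "\<And>x y. x \<in> V \<Longrightarrow> y \<in> V \<Longrightarrow> M x y = M y x"
    and real: "\<And>x y. x \<in> V \<Longrightarrow> y \<in> V \<Longrightarrow> Im (M x y) = 0"
    and eig: "\<And>x. x \<in> V \<Longrightarrow> mat_vec V M u x = of_real \<theta> * u x"
    and v_real: "\<And>x. Im (v x) = 0" and w_real: "\<And>x. Im (w x) = 0"
    and chi: "cmod \<chi> = 1"
    and transfer: "\<And>x. x \<in> V \<Longrightarrow> exp_evolve V M \<tau> v x = \<chi> * w x"
    and overlap: "(\<Sum>x\<in>V. u x * v x) \<noteq> 0"
  shows "cis (- (\<tau> * \<theta>)) ^ 2 = \<chi> ^ 2"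
proof -
  define l where "l = cis (- (\<tau> * \<theta>))"
  define p where "p = (\<Sum>x\<in>V. u x * v x)"
  define q where "q = (\<Sum>x\<in>V. u x * w x)"
  have cnj_p: "cnj p = (\<Sum>x\<in>V. cnj (u x) * v x)" and cnj_q: "cnj q = (\<Sum>x\<in>V. cnj (u x) * w x)"
    using v_real w_real by (simp_all add: p_def q_def complex_eq_iff)
  have eq: "\<chi> * q = l * p"
    unfolding l_def p_def q_def by (rule transfer_inner_eigenvector[OF fin sym eig transfer])
  have eig_cnj: "\<And>x. x \<in> V \<Longrightarrow> mat_vec V M (\<lambda>y. cnj (u y)) x = of_real \<theta> * cnj (u x)"
    using mat_vec_cnj_eigenvector[OF real eig] by blast
  have eq_cnj: "\<chi> * cnj q = l * cnj p"
    unfolding l_def cnj_p cnj_q by (rule transfer_inner_eigenvector[OF fin sym eig_cnj transfer])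
  have l_unit: "cnj l * l = 1"
    by (simp add: l_def cis_cnj cis_mult)
  have chi_unit: "\<chi> * cnj \<chi> = 1"
    using chi by (simp add: complex_norm_square[symmetric])
  from eq have "cnj \<chi> * cnj q = cnj l * cnj p"
    by (metis complex_cnj_mult)
  then have "(\<chi> * cnj \<chi>) * (cnj q * l) = (cnj l * l) * (\<chi> * cnj p)"
    by algebra
  then have "cnj q * l = \<chi> * cnj p"
    by (simp only: l_unit chi_unit mult_1_left)
  then have "\<chi> * cnj q * l = \<chi> * \<chi> * cnj p"
    by (simp add: mult_ac)
  then have "l * cnj p * l = \<chi> * \<chi> * cnj p"
    using eq_cnj by simp
  moreover have "cnj p \<noteq> 0"
    using overlap by (simp add: p_def[symmetric])
  ultimately show ?thesis
    by (simp add: l_def power2_eq_square mult_ac)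
qed

lemma laplacian_sym: "(\<And>x y. A x y = A y x) \<Longrightarrow> laplacian V A x y = laplacian V A y x"
  by (auto simp: laplacian_def)

lemma Im_laplacian: "Im (laplacian V A x y) = 0"
  by (simp add: laplacian_def)

lemma Im_pair_state: "Im (pair_state a b x) = 0"
  by (simp add: pair_state_def char_vec_def)

lemma inner_pair_state:
  assumes "finite V" "a \<in> V" "b \<in> V" "a \<noteq> b"
  shows "(\<Sum>x\<in>V. u x * pair_state a b x) = u a - u b"
proof -
  have "u x * pair_state a b x = (if x = a then u x else 0) - (if x = b then u x else 0)" for x
    using assms(4) by (auto simp: pair_state_def char_vec_def)
  then show ?thesis
    using assms by (simp add: sum_subtractf)
qed

lemma pair_state_proportional_imp_eq:
  assumes "a \<in> V" "b \<in> V" "a \<noteq> b" "c \<noteq> d"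
    and proportional: "\<And>x. x \<in> V \<Longrightarrow> pair_state a b x = \<chi> * pair_state c d x"
  shows "{a, b} = {c, d}"
proof -
  have "\<chi> * pair_state c d a = 1" "\<chi> * pair_state c d b = -1"
    using proportional[of a] proportional[of b] assms by (simp_all add: pair_state_def char_vec_def)
  then have "pair_state c d a \<noteq> 0" "pair_state c d b \<noteq> 0"
    by auto
  then have "a = c \<or> a = d" "b = c \<or> b = d"
    by (auto simp: pair_state_def char_vec_def split: if_splits)
  then show ?thesis
    using assms(3,4) by auto
qed

lemma cis_square_eq_imp:
  assumes "cis (- (\<tau> * x)) ^ 2 = cis (- (\<tau> * y)) ^ 2"
  shows "\<exists>m::int. \<tau> * (x - y) = of_int m * pi"
proof -
  have "cis (2 * \<tau> * (x - y)) = cis (- (2 * \<tau> * y)) / cis (- (2 * \<tau> * x))"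
    by (simp add: cis_divide algebra_simps)
  also have "\<dots> = 1"
    using assms by (simp add: DeMoivre mult_ac)
  finally have "cos (2 * \<tau> * (x - y)) = 1"
    by (metis cis.sel(1) one_complex.sel(1))
  then obtain m :: int where "2 * \<tau> * (x - y) = of_int m * 2 * pi"
    using cos_one_2pi_int by blast
  then show ?thesis
    by auto
qed

context
  fixes V :: "'v set" and A :: "'v \<Rightarrow> 'v \<Rightarrow> bool" and a b c d :: 'v
    and \<tau> :: real and \<chi> :: complex
  assumes fin: "finite V" and sym: "\<And>x y. A x y = A y x"
    and verts: "a \<in> V" "b \<in> V" "c \<in> V" "d \<in> V" and "a \<noteq> b" "c \<noteq> d"
    and chi: "cmod \<chi> = 1"
    and transfer: "\<And>x. x \<in> V \<Longrightarrow>
      exp_evolve V (laplacian V A) \<tau> (pair_state a b) x = \<chi> * pair_state c d x"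
begin

lemma pair_transfer_eigenvector:
  fixes \<theta> :: real
  assumes eig: "\<And>x. x \<in> V \<Longrightarrow> mat_vec V (laplacian V A) u x = of_real \<theta> * u x"
  shows "\<chi> * (u c - u d) = cis (- (\<tau> * \<theta>)) * (u a - u b)"
    and "u a \<noteq> u b \<Longrightarrow> cis (- (\<tau> * \<theta>)) ^ 2 = \<chi> ^ 2"
proof -
  note inner = inner_pair_state[OF fin verts(1,2) \<open>a \<noteq> b\<close>] inner_pair_state[OF fin verts(3,4) \<open>c \<noteq> d\<close>]
  note lap_sym = laplacian_sym[OF sym]
  show "\<chi> * (u c - u d) = cis (- (\<tau> * \<theta>)) * (u a - u b)"
    using transfer_inner_eigenvector[OF fin lap_sym eig transfer] by (simp only: inner)
  show "cis (- (\<tau> * \<theta>)) ^ 2 = \<chi> ^ 2" if "u a \<noteq> u b"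
    by (rule transfer_phase_square[OF fin lap_sym Im_laplacian eig Im_pair_state Im_pair_state chi transfer])
       (simp_all add: inner that)
qed

lemma pair_transfer_sign:
  fixes \<theta> :: real
  assumes eig: "\<And>x. x \<in> V \<Longrightarrow> mat_vec V (laplacian V A) u x = of_real \<theta> * u x"
  shows "\<exists>e. (e = 1 \<or> e = -1) \<and> u c - u d = e * (u a - u b)"
proof (cases "u a = u b")
  case True
  then show ?thesis
    using pair_transfer_eigenvector(1)[OF eig] chi by auto
next
  case False
  define \<rho> where "\<rho> = cis (- (\<tau> * \<theta>)) / \<chi>"
  have "\<chi> \<noteq> 0"
    using chi by auto
  then have "\<rho> ^ 2 = 1" and diff: "u c - u d = \<rho> * (u a - u b)"
    using pair_transfer_eigenvector[OF eig] False by (auto simp: \<rho>_def power_divide field_simps)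
  then have "(\<rho> - 1) * (\<rho> + 1) = 0"
    by (simp add: algebra_simps power2_eq_square)
  then have "\<rho> = 1 \<or> \<rho> = -1"
    by (simp add: eq_neg_iff_add_eq_0)
  then show ?thesis
    using diff by blast
qed

lemma pair_transfer_eigenvalue_gap:
  fixes \<theta> \<theta>' :: real
  assumes eig: "\<And>x. x \<in> V \<Longrightarrow> mat_vec V (laplacian V A) u x = of_real \<theta> * u x"
    and eig': "\<And>x. x \<in> V \<Longrightarrow> mat_vec V (laplacian V A) u' x = of_real \<theta>' * u' x"
    and "u a \<noteq> u b" "u' a \<noteq> u' b"
  shows "\<exists>m::int. \<tau> * (\<theta> - \<theta>') = of_int m * pi"
  using pair_transfer_eigenvector(2)[OF eig] pair_transfer_eigenvector(2)[OF eig'] assms(3,4)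
  by (intro cis_square_eq_imp) simp

end

section \<open>The Laplacian of \<open>\<Q>(C\<^sub>n)\<close> and its Bloch eigenvectors\<close>

definition cyc_succ :: "nat \<Rightarrow> nat \<Rightarrow> nat" where
  "cyc_succ n k = (if k + 1 = n then 0 else k + 1)"

definition cyc_pred :: "nat \<Rightarrow> nat \<Rightarrow> nat" where
  "cyc_pred n k = (if k = 0 then n - 1 else k - 1)"

definition cyc_edge :: "nat \<Rightarrow> nat \<Rightarrow> nat set" where
  "cyc_edge n k = {k, cyc_succ n k}"

definition edge_index :: "nat \<Rightarrow> nat set \<Rightarrow> nat" where
  "edge_index n e = (THE k. k < n \<and> e = cyc_edge n k)"

abbreviation QC_verts :: "nat \<Rightarrow> (nat + nat set) set" where
  "QC_verts n \<equiv> Q_verts {0..<n} (cycle_adj n)"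

lemma cyc_succ_eq_mod: "k < n \<Longrightarrow> (k + 1) mod n = cyc_succ n k"
  by (auto simp: cyc_succ_def)

lemma cyc_succ_less: "k < n \<Longrightarrow> cyc_succ n k < n"
  by (auto simp: cyc_succ_def)

lemma cyc_pred_less: "k < n \<Longrightarrow> cyc_pred n k < n"
  by (auto simp: cyc_pred_def)

lemma cyc_succ_pred: "k < n \<Longrightarrow> cyc_succ n (cyc_pred n k) = k"
  by (auto simp: cyc_succ_def cyc_pred_def)

lemma cyc_succ_inj: "k < n \<Longrightarrow> m < n \<Longrightarrow> cyc_succ n k = cyc_succ n m \<Longrightarrow> k = m"
  by (auto simp: cyc_succ_def split: if_splits)

lemma cyc_succ_neq: "2 \<le> n \<Longrightarrow> k < n \<Longrightarrow> cyc_succ n k \<noteq> k"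
  by (auto simp: cyc_succ_def)

lemma cyc_pred_neq: "2 \<le> n \<Longrightarrow> k < n \<Longrightarrow> cyc_pred n k \<noteq> k"
  by (auto simp: cyc_pred_def)

lemma cyc_succ_neq_pred: "3 \<le> n \<Longrightarrow> k < n \<Longrightarrow> cyc_succ n k \<noteq> cyc_pred n k"
  by (auto simp: cyc_succ_def cyc_pred_def)

lemma cyc_succ_succ_neq: "3 \<le> n \<Longrightarrow> k < n \<Longrightarrow> cyc_succ n (cyc_succ n k) \<noteq> k"
  by (auto simp: cyc_succ_def)

lemma cyc_succ_eq_iff: "k < n \<Longrightarrow> i < n \<Longrightarrow> i = cyc_succ n k \<longleftrightarrow> k = cyc_pred n i"
  by (auto simp: cyc_succ_def cyc_pred_def)

lemma mem_cyc_edge: "i \<in> cyc_edge n k \<longleftrightarrow> i = k \<or> i = cyc_succ n k"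
  by (auto simp: cyc_edge_def)

lemma cyc_edge_inj:
  assumes n: "3 \<le> n" and k: "k < n" and m: "m < n" and eq: "cyc_edge n k = cyc_edge n m"
  shows "k = m"
proof (rule ccontr)
  assume "k \<noteq> m"
  have "k \<in> cyc_edge n m" "cyc_succ n k \<in> cyc_edge n m"
    using eq by (auto simp: cyc_edge_def)
  then have "k = cyc_succ n m" and "cyc_succ n k = m \<or> cyc_succ n k = cyc_succ n m"
    using \<open>k \<noteq> m\<close> by (auto simp: mem_cyc_edge)
  then show False
    using cyc_succ_succ_neq[OF n m] cyc_succ_inj[OF k m] \<open>k \<noteq> m\<close> by auto
qed

lemma graph_edges_cycle: "graph_edges {0..<n} (cycle_adj n) = cyc_edge n ` {0..<n}"
proof (intro equalityI subsetI)
  fix e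
  assume "e \<in> graph_edges {0..<n} (cycle_adj n)"
  then obtain u v where e: "e = {u, v}" "u < n" "v < n" "v = (u + 1) mod n \<or> u = (v + 1) mod n"
    by (auto simp: graph_edges_def cycle_adj_def)
  then have "e = cyc_edge n u \<or> e = cyc_edge n v"
  proof (cases "v = (u + 1) mod n")
    case True
    then show ?thesis
      using e cyc_succ_eq_mod[of u n] by (simp add: cyc_edge_def)
  next
    case False
    then have "u = cyc_succ n v"
      using e cyc_succ_eq_mod[of v n] by simp
    then show ?thesis
      using e by (auto simp: cyc_edge_def)
  qed
  then show "e \<in> cyc_edge n ` {0..<n}"
    using e by auto
next
  fix e
  assume "e \<in> cyc_edge n ` {0..<n}"
  then obtain k where k: "k < n" "e = cyc_edge n k"
    by auto
  have "e = {k, (k + 1) mod n}"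
    using k cyc_succ_eq_mod[of k n] by (simp add: cyc_edge_def)
  moreover have "(k + 1) mod n < n" "cycle_adj n k ((k + 1) mod n)"
    using k by (simp_all add: cycle_adj_def)
  ultimately show "e \<in> graph_edges {0..<n} (cycle_adj n)"
    using k unfolding graph_edges_def by (intro CollectI exI[of _ k] exI[of _ "(k + 1) mod n"]) simp
qed

lemma QC_verts_eq: "QC_verts n = Inl ` {0..<n} \<union> Inr ` cyc_edge n ` {0..<n}"
  by (simp add: Q_verts_def graph_edges_cycle)

lemma finite_QC_verts: "finite (QC_verts n)"
  by (simp add: QC_verts_eq)

lemma QC_verts_cases:
  assumes "x \<in> QC_verts n"
  obtains (Inl) i where "x = Inl i" "i < n" | (Inr) k where "x = Inr (cyc_edge n k)" "k < n"
  using assms by (auto simp: QC_verts_eq)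

lemma edge_index_cyc_edge: "3 \<le> n \<Longrightarrow> k < n \<Longrightarrow> edge_index n (cyc_edge n k) = k"
  unfolding edge_index_def by (rule the_equality) (auto dest: cyc_edge_inj)

lemma Q_adj_cyc_edges:
  assumes "3 \<le> n" "k < n" "m < n"
  shows "Q_adj (Inr (cyc_edge n k)) (Inr (cyc_edge n m)) \<longleftrightarrow> m = cyc_succ n k \<or> m = cyc_pred n k"
proof -
  have n: "2 \<le> n"
    using assms by simp
  have meet: "cyc_edge n k \<inter> cyc_edge n m \<noteq> {} \<longleftrightarrow>
      k = m \<or> k = cyc_succ n m \<or> cyc_succ n k = m \<or> cyc_succ n k = cyc_succ n m"
    by (auto simp: cyc_edge_def)
  have distinct: "cyc_edge n k \<noteq> cyc_edge n m \<longleftrightarrow> k \<noteq> m"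
    using cyc_edge_inj[OF assms] by auto
  have "k = cyc_succ n m \<longleftrightarrow> m = cyc_pred n k"
    using cyc_succ_eq_iff[OF assms(3,2)] .
  then show ?thesis
    unfolding Q_adj.simps meet distinct
    using cyc_succ_inj[OF assms(2,3)] cyc_succ_neq[OF n assms(2)] cyc_pred_neq[OF n assms(2)]
    by auto
qed

lemma QC_neighbours_Inl:
  assumes "3 \<le> n" "i < n"
  shows "{z \<in> QC_verts n. Q_adj (Inl i) z} = {Inr (cyc_edge n i), Inr (cyc_edge n (cyc_pred n i))}"
proof (intro equalityI subsetI)
  fix z :: "nat + nat set"
  assume z: "z \<in> {z \<in> QC_verts n. Q_adj (Inl i) z}"
  then have "z \<in> QC_verts n" by simp
  then show "z \<in> {Inr (cyc_edge n i), Inr (cyc_edge n (cyc_pred n i))}"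
  proof (cases rule: QC_verts_cases)
    case (Inl j)
    then show ?thesis using z by simp
  next
    case (Inr m)
    then have "i = m \<or> i = cyc_succ n m"
      using z by (simp add: mem_cyc_edge)
    then show ?thesis
      using Inr cyc_succ_eq_iff[OF Inr(2) assms(2)] by auto
  qed
next
  fix z :: "nat + nat set"
  assume "z \<in> {Inr (cyc_edge n i), Inr (cyc_edge n (cyc_pred n i))}"
  then show "z \<in> {z \<in> QC_verts n. Q_adj (Inl i) z}"
    using assms cyc_pred_less[OF assms(2)] cyc_succ_pred[OF assms(2)]
    by (auto simp: QC_verts_eq mem_cyc_edge)
qed

lemma QC_neighbours_Inr:
  assumes n: "3 \<le> n" and k: "k < n"
  shows "{z \<in> QC_verts n. Q_adj (Inr (cyc_edge n k)) z} =
     {Inl k, Inl (cyc_succ n k), Inr (cyc_edge n (cyc_succ n k)), Inr (cyc_edge n (cyc_pred n k))}"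
    (is "?N = ?R")
proof (intro equalityI subsetI)
  fix z
  assume z: "z \<in> ?N"
  then have "z \<in> QC_verts n" by simp
  then show "z \<in> ?R"
  proof (cases rule: QC_verts_cases)
    case (Inl i)
    then show ?thesis using z by (simp add: mem_cyc_edge)
  next
    case (Inr m)
    then show ?thesis using z Q_adj_cyc_edges[OF n k Inr(2)] by auto
  qed
next
  fix z
  assume "z \<in> ?R"
  moreover have "Q_adj (Inr (cyc_edge n k)) (Inr (cyc_edge n (cyc_succ n k)))"
    "Q_adj (Inr (cyc_edge n k)) (Inr (cyc_edge n (cyc_pred n k)))"
    using Q_adj_cyc_edges[OF n k cyc_succ_less[OF k]] Q_adj_cyc_edges[OF n k cyc_pred_less[OF k]]
    by simp_all
  moreover have "Inl k \<in> QC_verts n" "Inl (cyc_succ n k) \<in> QC_verts n"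
    "Inr (cyc_edge n (cyc_succ n k)) \<in> QC_verts n" "Inr (cyc_edge n (cyc_pred n k)) \<in> QC_verts n"
    using k cyc_succ_less[OF k] cyc_pred_less[OF k] by (simp_all add: QC_verts_eq)
  moreover have "Q_adj (Inr (cyc_edge n k)) (Inl k)" "Q_adj (Inr (cyc_edge n k)) (Inl (cyc_succ n k))"
    by (simp_all add: mem_cyc_edge)
  ultimately show "z \<in> ?N"
    by blast
qed

lemma Q_adj_sym: "Q_adj x y = Q_adj y x"
  by (cases x; cases y) auto

lemma mat_vec_laplacian:
  assumes "finite V" "x \<in> V"
  shows "mat_vec V (laplacian V A) u x = of_nat (card {z\<in>V. A x z}) * u x - (\<Sum>y\<in>{z\<in>V. A x z}. u y)"
proof -
  have "laplacian V A x y * u y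
        = (if x = y then of_nat (card {z\<in>V. A x z}) * u y else 0) - (if A x y then u y else 0)" for y
    by (simp add: laplacian_def left_diff_distrib)
  then show ?thesis
    using assms by (simp add: mat_vec_def sum_subtractf sum.inter_filter[symmetric])
qed

definition cyc_mode :: "nat \<Rightarrow> complex \<Rightarrow> complex \<Rightarrow> complex \<Rightarrow> nat + nat set \<Rightarrow> complex" where
  "cyc_mode n X Y w x = (case x of Inl i \<Rightarrow> X * w ^ i | Inr e \<Rightarrow> Y * w ^ edge_index n e)"

text \<open>For \<open>w\<^sup>n = 1\<close> the Laplacian of \<open>\<Q>(C\<^sub>n)\<close> acts on \<^const>\<open>cyc_mode\<close> through the matrix
  \<open>[[2, -(1 + w\<^sup>-\<^sup>1)], [-(1 + w), 4 - w - w\<^sup>-\<^sup>1]]\<close> applied to \<open>(X, Y)\<close>, and \<open>w\<^sup>n\<^sup>-\<^sup>1 = w\<^sup>-\<^sup>1\<close>.\<close>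

definition mode_equations :: "nat \<Rightarrow> complex \<Rightarrow> complex \<Rightarrow> complex \<Rightarrow> real \<Rightarrow> bool" where
  "mode_equations n X Y w \<theta> \<longleftrightarrow> w ^ n = 1 \<and>
     2 * X - (1 + w ^ (n - 1)) * Y = of_real \<theta> * X \<and>
     - (1 + w) * X + (4 - w - w ^ (n - 1)) * Y = of_real \<theta> * Y"

lemma cyc_mode_Inl [simp]: "cyc_mode n X Y w (Inl i) = X * w ^ i"
  by (simp add: cyc_mode_def)

lemma cyc_mode_Inr: "3 \<le> n \<Longrightarrow> k < n \<Longrightarrow> cyc_mode n X Y w (Inr (cyc_edge n k)) = Y * w ^ k"
  by (simp add: cyc_mode_def edge_index_cyc_edge)

lemma power_cyc_succ: "(w::complex) ^ n = 1 \<Longrightarrow> k < n \<Longrightarrow> w ^ cyc_succ n k = w ^ k * w"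
  by (cases "k + 1 = n") (auto simp: cyc_succ_def mult.commute[of w])

lemma power_cyc_pred:
  assumes "(w::complex) ^ n = 1" "k < n"
  shows "w ^ cyc_pred n k = w ^ k * w ^ (n - 1)"
proof (cases "k = 0")
  case True
  then show ?thesis by (simp add: cyc_pred_def)
next
  case False
  then have "w ^ k * w ^ (n - 1) = w ^ (k - 1) * w ^ n"
    using assms(2) by (simp flip: power_add)
  then show ?thesis
    using False assms(1) by (simp add: cyc_pred_def)
qed

lemma cyc_mode_eigenvector:
  assumes n: "3 \<le> n" and eqs: "mode_equations n X Y w \<theta>" and x: "x \<in> QC_verts n"
  shows "mat_vec (QC_verts n) (laplacian (QC_verts n) Q_adj) (cyc_mode n X Y w) x
         = of_real \<theta> * cyc_mode n X Y w x"
  using x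
proof (cases rule: QC_verts_cases)
  case (Inl i)
  have wn: "w ^ n = 1" and eq1: "2 * X - (1 + w ^ (n - 1)) * Y = of_real \<theta> * X"
    using eqs by (simp_all add: mode_equations_def)
  have "Inr (cyc_edge n i) \<noteq> (Inr (cyc_edge n (cyc_pred n i)) :: nat + nat set)"
    using cyc_edge_inj[OF n Inl(2) cyc_pred_less[OF Inl(2)]] cyc_pred_neq[of n i] n Inl(2) by auto
  then have "mat_vec (QC_verts n) (laplacian (QC_verts n) Q_adj) (cyc_mode n X Y w) x
      = 2 * (X * w ^ i) - (Y * w ^ i + Y * (w ^ i * w ^ (n - 1)))"
    unfolding mat_vec_laplacian[OF finite_QC_verts x]
    using QC_neighbours_Inl[OF n Inl(2)] Inl n by (simp add: cyc_mode_Inr cyc_pred_less power_cyc_pred[OF wn])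
  also have "\<dots> = w ^ i * (2 * X - (1 + w ^ (n - 1)) * Y)"
    by (simp add: algebra_simps)
  finally show ?thesis
    using Inl eq1 by simp
next
  case (Inr k)
  have wn: "w ^ n = 1" and eq2: "- (1 + w) * X + (4 - w - w ^ (n - 1)) * Y = of_real \<theta> * Y"
    using eqs by (simp_all add: mode_equations_def)
  have ne1: "cyc_succ n k \<noteq> k"
    using cyc_succ_neq[OF _ Inr(2)] n by simp
  have ne2: "cyc_edge n (cyc_succ n k) \<noteq> cyc_edge n (cyc_pred n k)"
    using cyc_edge_inj[OF n cyc_succ_less[OF Inr(2)] cyc_pred_less[OF Inr(2)]] cyc_succ_neq_pred[OF n Inr(2)]
    by auto
  have "card {Inl k, Inl (cyc_succ n k), Inr (cyc_edge n (cyc_succ n k)),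
              Inr (cyc_edge n (cyc_pred n k)) :: nat + nat set} = 4"
    using ne1 ne2 by simp
  then have "mat_vec (QC_verts n) (laplacian (QC_verts n) Q_adj) (cyc_mode n X Y w) x
      = 4 * (Y * w ^ k) - (X * w ^ k + (X * (w ^ k * w) + (Y * (w ^ k * w) + Y * (w ^ k * w ^ (n - 1)))))"
    unfolding mat_vec_laplacian[OF finite_QC_verts x]
    using QC_neighbours_Inr[OF n Inr(2)] ne1 ne2 Inr n
    by (simp add: cyc_mode_Inr cyc_succ_less cyc_pred_less power_cyc_pred[OF wn] power_cyc_succ[OF wn])
  also have "\<dots> = w ^ k * (- (1 + w) * X + (4 - w - w ^ (n - 1)) * Y)"
    by (simp add: algebra_simps)
  finally show ?thesis
    using Inr eq2 n by (simp add: cyc_mode_Inr)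
qed

lemma mode_equations_const: "0 < n \<Longrightarrow> mode_equations n 1 (-1) 1 4"
  by (simp add: mode_equations_def)

lemma mode_equations_alternating_verts: "even n \<Longrightarrow> 0 < n \<Longrightarrow> mode_equations n 1 0 (-1) 2"
  by (simp add: mode_equations_def)

lemma mode_equations_alternating_edges:
  assumes "even n" "0 < n"
  shows "mode_equations n 0 1 (-1) 6"
proof -
  have "odd (n - 1)"
    using assms by simp
  then have "(-1 :: complex) ^ (n - 1) = -1"
    by simp
  then show ?thesis
    using assms by (simp add: mode_equations_def)
qed

definition root_unity :: "nat \<Rightarrow> nat \<Rightarrow> complex" where
  "root_unity n j = cis (2 * pi * real j / real n)"

definition root_cos :: "nat \<Rightarrow> nat \<Rightarrow> real" where
  "root_cos n j = cos (2 * pi * real j / real n)"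

definition root_disc :: "nat \<Rightarrow> nat \<Rightarrow> real" where
  "root_disc n j = sqrt (3 + (root_cos n j)\<^sup>2)"

text \<open>With \<open>c = root_cos n j\<close>, the two roots (\<open>\<sigma> = \<plusminus>1\<close>) of the characteristic equation
  \<open>(4 - 2c - \<theta>) (2 - \<theta>) = 2 + 2c\<close> of the matrix above for \<open>w = root_unity n j\<close>.\<close>

definition root_eig :: "nat \<Rightarrow> nat \<Rightarrow> real \<Rightarrow> real" where
  "root_eig n j \<sigma> = 3 - root_cos n j + \<sigma> * root_disc n j"

lemma root_disc_sq: "(root_disc n j)\<^sup>2 = 3 + (root_cos n j)\<^sup>2"
  by (simp add: root_disc_def)

lemma root_disc_pos: "root_disc n j > 0"
  by (simp add: root_disc_def add_pos_nonneg)

lemma root_eig_diff: "root_eig n j 1 - root_eig n j (-1) = 2 * root_disc n j"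
  by (simp add: root_eig_def)

lemma sign_sq: "\<bar>\<sigma>::real\<bar> = 1 \<Longrightarrow> \<sigma>\<^sup>2 = 1"
  by (metis power2_abs power_one)

lemma root_unity_power: "root_unity n j ^ i = cis (2 * pi * real j * real i / real n)"
  by (simp add: root_unity_def DeMoivre mult_ac)

lemma root_unity_power_n: "0 < n \<Longrightarrow> root_unity n j ^ n = 1"
  using cis_multiple_2pi[of "real j"] by (simp add: root_unity_power)

lemma root_unity_power_pred:
  assumes "0 < n"
  shows "root_unity n j ^ (n - 1) = cnj (root_unity n j)"
proof -
  have "root_unity n j * root_unity n j ^ (n - 1) = 1"
    using root_unity_power_n[OF assms, of j] assms by (metis Suc_diff_1 power_Suc)
  moreover have "root_unity n j * cnj (root_unity n j) = 1"
    by (simp add: root_unity_def cis_cnj cis_mult)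
  ultimately show ?thesis
    by (metis mult_left_cancel mult_zero_left zero_neq_one)
qed

lemma mode_equations_root:
  assumes n: "0 < n" and \<sigma>: "\<bar>\<sigma>\<bar> = 1" and \<theta>: "\<theta> = root_eig n j \<sigma>"
  shows "mode_equations n (1 + cnj (root_unity n j)) (of_real (2 - \<theta>)) (root_unity n j) \<theta>"
proof -
  define w where "w = root_unity n j"
  define c where "c = root_cos n j"
  have char: "(4 - 2 * c - \<theta>) * (2 - \<theta>) = 2 + 2 * c"
    using root_disc_sq[of n j] sign_sq[OF \<sigma>] unfolding \<theta> root_eig_def c_def by algebra
  have sum: "w + cnj w = of_real (2 * c)"
    by (simp add: w_def c_def root_unity_def root_cos_def complex_add_cnj)
  have prod: "w * cnj w = 1"
    by (simp add: w_def root_unity_def cis_cnj cis_mult)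
  have "- (1 + w) * (1 + cnj w) + (4 - w - cnj w) * of_real (2 - \<theta>)
        = - (1 + (w + cnj w) + w * cnj w) + (4 - (w + cnj w)) * of_real (2 - \<theta>)"
    by (simp add: algebra_simps)
  also have "\<dots> = of_real (- (2 + 2 * c) + (4 - 2 * c) * (2 - \<theta>))"
    unfolding sum prod by simp
  also have "- (2 + 2 * c) + (4 - 2 * c) * (2 - \<theta>) = \<theta> * (2 - \<theta>)"
    using char by algebra
  finally show ?thesis
    unfolding mode_equations_def w_def[symmetric]
    using root_unity_power_n[OF n] root_unity_power_pred[OF n] by (simp add: w_def algebra_simps)
qed

lemma root_unity_power_eq_imp_dvd:
  assumes n: "0 < n" and eq: "root_unity n j ^ i = root_unity n j ^ k"
  shows "int n dvd int j * (int i - int k)"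
proof -
  define a where "a = 2 * pi * real j * real i / real n"
  define b where "b = 2 * pi * real j * real k / real n"
  have "cis a = cis b"
    using eq by (simp add: root_unity_power a_def b_def)
  then have "cis (a - b) = 1"
    by (metis cis_mult cis_cnj cis_zero diff_conv_add_uminus right_minus)
  then have "cos (a - b) = 1"
    by (metis cis.sel(1) one_complex.sel(1))
  then obtain m :: int where m: "a - b = of_int m * 2 * pi"
    using cos_one_2pi_int by blast
  have "a - b = 2 * pi * (real j * (real i - real k)) / real n"
    by (simp add: a_def b_def algebra_simps diff_divide_distrib)
  then have "2 * pi * (real j * (real i - real k)) = of_int m * 2 * pi * real n"
    using m n by (simp add: field_simps)
  then have "real j * (real i - real k) = of_int m * real n"
    by simp
  then have "of_int (int j * (int i - int k)) = (of_int (m * int n) :: real)"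
    by simp
  then show ?thesis
    by (metis dvd_triv_right mult.commute of_int_eq_iff)
qed

lemma root_unity_power_inj:
  assumes "i < n" "k < n" "root_unity n 1 ^ i = root_unity n 1 ^ k"
  shows "i = k"
proof -
  have "int n dvd int i - int k"
    using root_unity_power_eq_imp_dvd[of n 1 i k] assms by simp
  then obtain m where m: "int i - int k = int n * m"
    by (rule dvdE)
  have "m = 0"
  proof (rule ccontr)
    assume "m \<noteq> 0"
    then have "int n * 1 \<le> int n * \<bar>m\<bar>"
      by (intro mult_left_mono) auto
    then have "int n \<le> \<bar>int n * m\<bar>"
      by (simp add: abs_mult)
    then show False
      using m assms(1,2) by linarith
  qed
  then show ?thesis
    using m by simp
qed

lemma root_angle_le_pi:
  assumes "2 * j \<le> n" "0 < n"
  shows "2 * pi * real j / real n \<le> pi"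
proof -
  have "2 * real j \<le> real n"
    using assms(1) by linarith
  then have "2 * real j / real n \<le> 1"
    using assms(2) by simp
  then have "pi * (2 * real j / real n) \<le> pi * 1"
    by (intro mult_left_mono) auto
  then show ?thesis
    by (simp add: mult_ac)
qed

lemma root_cos_bounds:
  assumes "0 < j" "2 * j < n"
  shows "root_cos n j < 1" "-1 < root_cos n j"
proof -
  have pos: "0 < 2 * pi * real j / real n"
    using assms by simp
  have "2 * real j \<noteq> real n"
    using assms(2) by linarith
  then have "2 * pi * real j / real n \<noteq> pi"
    using assms by (simp add: field_simps)
  then have less: "2 * pi * real j / real n < pi"
    using root_angle_le_pi[of j n] assms by simp
  show "root_cos n j < 1"
    unfolding root_cos_def using cos_monotone_0_pi[of 0 "2 * pi * real j / real n"] pos less by simp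
  show "-1 < root_cos n j"
    unfolding root_cos_def using cos_monotone_0_pi[of "2 * pi * real j / real n" pi] pos less by simp
qed

lemma root_cos_inj:
  assumes "2 * j < n" "2 * j' < n" "root_cos n j = root_cos n j'"
  shows "j = j'"
proof -
  have "2 * pi * real j / real n = 2 * pi * real j' / real n"
    using cos_inj_pi[of "2 * pi * real j / real n" "2 * pi * real j' / real n"]
      root_angle_le_pi[of j n] root_angle_le_pi[of j' n] assms
    by (simp add: root_cos_def)
  then show ?thesis
    using assms by simp
qed

lemma root_cos_values: "root_cos 3 1 = -1/2" "root_cos 4 1 = 0" "root_cos 6 1 = 1/2"
proof -
  have "cos (2 * pi / 3) = - cos (pi - 2 * pi / 3)"
    by (simp only: cos_pi_minus minus_minus)
  also have "pi - 2 * pi / 3 = pi / 3"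
    by simp
  finally show "root_cos 3 1 = -1/2"
    by (simp add: root_cos_def cos_60)
  show "root_cos 4 1 = 0"
    by (simp add: root_cos_def)
  have "2 * pi / 6 = pi / 3"
    by simp
  then show "root_cos 6 1 = 1/2"
    by (simp add: root_cos_def cos_60)
qed

lemma norm_one_plus_cnj_root_unity_sq: "(cmod (1 + cnj (root_unity n j)))\<^sup>2 = 2 + 2 * root_cos n j"
proof -
  define \<phi> where "\<phi> = 2 * pi * real j / real n"
  have "1 + cnj (root_unity n j) = Complex (1 + cos \<phi>) (- sin \<phi>)"
    by (simp add: root_unity_def \<phi>_def complex_eq_iff)
  then have "(cmod (1 + cnj (root_unity n j)))\<^sup>2 = (1 + cos \<phi>)\<^sup>2 + (sin \<phi>)\<^sup>2"
    by (simp add: cmod_def)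
  also have "\<dots> = 2 + 2 * cos \<phi>"
    using sin_cos_squared_add[of \<phi>] by (simp add: power2_eq_square algebra_simps)
  finally show ?thesis
    by (simp add: root_cos_def \<phi>_def)
qed

lemma one_plus_cnj_root_unity_neq_0: "root_cos n j \<noteq> -1 \<Longrightarrow> 1 + cnj (root_unity n j) \<noteq> 0"
  using norm_one_plus_cnj_root_unity_sq[of n j] by auto

lemma root_eig_neq_2:
  assumes \<sigma>: "\<bar>\<sigma>\<bar> = 1" and c: "root_cos n j \<noteq> -1"
  shows "root_eig n j \<sigma> \<noteq> 2"
proof
  define c where "c = root_cos n j"
  assume "root_eig n j \<sigma> = 2"
  then have "\<sigma> * root_disc n j = c - 1"
    by (simp add: root_eig_def c_def)
  then have "(\<sigma> * root_disc n j)\<^sup>2 = (c - 1)\<^sup>2"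
    by simp
  then have "3 + c\<^sup>2 = (c - 1)\<^sup>2"
    using root_disc_sq[of n j] sign_sq[OF \<sigma>] by (simp add: power_mult_distrib c_def)
  then have "c = -1"
    by (simp add: power2_eq_square algebra_simps)
  then show False
    using c by (simp add: c_def)
qed

lemma norm_root_mode_coeffs_neq:
  assumes \<sigma>: "\<bar>\<sigma>\<bar> = 1" and c: "root_cos n j \<noteq> 1" "root_cos n j \<noteq> -1"
  shows "cmod (1 + cnj (root_unity n j)) \<noteq> \<bar>2 - root_eig n j \<sigma>\<bar>"
proof
  define c where "c = root_cos n j"
  define s where "s = root_disc n j"
  have s: "s\<^sup>2 = 3 + c\<^sup>2" and \<sigma>2: "\<sigma>\<^sup>2 = 1"
    using root_disc_sq[of n j] sign_sq[OF \<sigma>] by (simp_all add: c_def s_def)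
  have "2 - root_eig n j \<sigma> = c - 1 - \<sigma> * s"
    by (simp add: root_eig_def c_def s_def)
  moreover assume "cmod (1 + cnj (root_unity n j)) = \<bar>2 - root_eig n j \<sigma>\<bar>"
  ultimately have "(cmod (1 + cnj (root_unity n j)))\<^sup>2 = (c - 1 - \<sigma> * s)\<^sup>2"
    by (metis power2_abs)
  then have "2 + 2 * c = (c - 1 - \<sigma> * s)\<^sup>2"
    using norm_one_plus_cnj_root_unity_sq[of n j] unfolding c_def by linarith
  then have "(c - 1) * ((c - 1) - \<sigma> * s) = 0"
    using s \<sigma>2 by algebra
  then have "\<sigma> * s = c - 1"
    using c by (simp add: c_def)
  then have "(\<sigma> * s)\<^sup>2 = (c - 1)\<^sup>2"
    by simp
  then have "3 + c\<^sup>2 = (c - 1)\<^sup>2"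
    using s \<sigma>2 by (simp add: power_mult_distrib)
  then have "c = -1"
    by (simp add: power2_eq_square algebra_simps)
  then show False
    using c by (simp add: c_def)
qed

section \<open>Commensurability of the eigenvalues\<close>

fun cheb_seq :: "int \<Rightarrow> int \<Rightarrow> nat \<Rightarrow> int" where
  "cheb_seq p q 0 = 2"
| "cheb_seq p q (Suc 0) = p"
| "cheb_seq p q (Suc (Suc m)) = p * cheb_seq p q (Suc m) - q\<^sup>2 * cheb_seq p q m"

lemma two_cos_Suc_Suc:
  "2 * cos (real (Suc (Suc m)) * \<phi>) = 2 * cos \<phi> * (2 * cos (real (Suc m) * \<phi>)) - 2 * cos (real m * \<phi>)"
proof -
  have a: "real (Suc (Suc m)) * \<phi> = real (Suc m) * \<phi> + \<phi>" and b: "real m * \<phi> = real (Suc m) * \<phi> - \<phi>"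
    by (simp_all add: algebra_simps)
  show ?thesis
    unfolding a b cos_add cos_diff by (simp add: algebra_simps)
qed

lemma cheb_seq_two_cos:
  assumes q: "q \<noteq> 0" and pq: "2 * cos \<phi> = of_int p / of_int q"
  shows "of_int (cheb_seq p q m) = of_int q ^ m * (2 * cos (real m * \<phi>))"
proof -
  have "of_int (cheb_seq p q m) = of_int q ^ m * (2 * cos (real m * \<phi>)) \<and>
        of_int (cheb_seq p q (Suc m)) = of_int q ^ Suc m * (2 * cos (real (Suc m) * \<phi>))"
  proof (induction m)
    case 0
    then show ?case using pq q by simp
  next
    case (Suc m)
    have "of_int (cheb_seq p q (Suc (Suc m)))
          = of_int p * (of_int q ^ Suc m * (2 * cos (real (Suc m) * \<phi>)))
            - of_int q ^ 2 * (of_int q ^ m * (2 * cos (real m * \<phi>)))"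
      using Suc by simp
    also have "\<dots> = of_int q ^ Suc (Suc m) *
        ((of_int p / of_int q) * (2 * cos (real (Suc m) * \<phi>)) - 2 * cos (real m * \<phi>))"
      using q by (simp add: field_simps power2_eq_square)
    also have "\<dots> = of_int q ^ Suc (Suc m) * (2 * cos (real (Suc (Suc m)) * \<phi>))"
      unfolding two_cos_Suc_Suc[of m \<phi>] pq[symmetric] by simp
    finally show ?case
      using Suc by simp
  qed
  then show ?thesis by simp
qed

lemma cheb_seq_cong_power: "1 \<le> m \<Longrightarrow> q dvd cheb_seq p q m - p ^ m"
proof -
  have "q dvd cheb_seq p q (Suc m) - p ^ Suc m \<and> q dvd cheb_seq p q (Suc (Suc m)) - p ^ Suc (Suc m)" for m
  proof (induction m)
    case 0
    have "cheb_seq p q 2 - p\<^sup>2 = q * (- q * 2)"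
      by (simp add: numeral_2_eq_2 power2_eq_square)
    then show ?case
      by (simp add: numeral_2_eq_2[symmetric])
  next
    case (Suc m)
    have "cheb_seq p q (Suc (Suc (Suc m))) - p ^ Suc (Suc (Suc m)) =
          p * (cheb_seq p q (Suc (Suc m)) - p ^ Suc (Suc m)) - q * (q * cheb_seq p q (Suc m))"
      by (simp add: algebra_simps power2_eq_square)
    moreover have "q dvd p * (cheb_seq p q (Suc (Suc m)) - p ^ Suc (Suc m)) - q * (q * cheb_seq p q (Suc m))"
    proof (rule dvd_diff)
      show "q dvd p * (cheb_seq p q (Suc (Suc m)) - p ^ Suc (Suc m))"
        using Suc.IH by (intro dvd_mult) simp
    qed simp
    ultimately show ?case
      using Suc by simp
  qed
  then show "1 \<le> m \<Longrightarrow> q dvd cheb_seq p q m - p ^ m"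
    by (cases m) auto
qed

text \<open>If \<open>2 cos \<phi> = p/q\<close> in lowest terms and \<open>cos (n \<phi>) = 1\<close>, then \<open>q\<close> divides
  \<open>q\<^sup>n \<cdot> 2 cos (n \<phi>) = cheb_seq p q n \<equiv> p\<^sup>n (mod q)\<close>, so \<open>q\<close> is a unit.\<close>

lemma two_cos_rational_imp_int:
  assumes n: "n > 0" and rat: "2 * cos (2 * pi * real k / real n) \<in> \<rat>"
  shows "2 * cos (2 * pi * real k / real n) \<in> \<int>"
proof -
  define \<phi> where "\<phi> = 2 * pi * real k / real n"
  obtain p q where q: "q > 0" and cop: "coprime p q" and pq: "2 * cos \<phi> = of_int p / of_int q"
    using rat Rats_cases' unfolding \<phi>_def[symmetric] by metis
  have "real n * \<phi> = (2 * pi) * of_int (int k)"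
    using n by (simp add: \<phi>_def)
  then have "cos (real n * \<phi>) = 1"
    by (simp only: cos_int_2pin)
  then have "(of_int (cheb_seq p q n) :: real) = of_int (q ^ n * 2)"
    using cheb_seq_two_cos[of q \<phi> p n] q pq by simp
  then have "cheb_seq p q n = q ^ n * 2"
    by (simp only: of_int_eq_iff)
  then have "q dvd cheb_seq p q n"
    using n by simp
  moreover have "q dvd cheb_seq p q n - p ^ n"
    using cheb_seq_cong_power[of n q p] n by simp
  ultimately have "q dvd cheb_seq p q n - (cheb_seq p q n - p ^ n)"
    by (rule dvd_diff)
  then have "q dvd p ^ n"
    by simp
  moreover have "coprime q (p ^ n)"
    using cop by (simp add: coprime_commute)
  ultimately have "q = 1"
    using q coprime_common_divisor[OF _ dvd_refl] by fastforce
  then show ?thesis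
    using pq unfolding \<phi>_def by simp
qed

lemma int_square_not_3_5_7_13:
  fixes z :: int
  assumes "z\<^sup>2 = N" "N \<in> {3, 5, 7, 13}"
  shows False
proof (cases "\<bar>z\<bar> \<le> 3")
  case True
  then have "z \<in> {-3, -2, -1, 0, 1, 2, 3}"
    by auto
  then show ?thesis
    using assms by auto
next
  case False
  then have "4 * 4 \<le> \<bar>z\<bar> * \<bar>z\<bar>"
    by (intro mult_mono) auto
  then have "16 \<le> z\<^sup>2"
    by (simp add: power2_eq_square abs_mult[symmetric])
  then show ?thesis
    using assms by auto
qed

lemma Rats_square_not_3_5_7_13:
  fixes x :: real
  assumes x: "x \<in> \<rat>" and sq: "x\<^sup>2 = of_int N" and N: "N \<in> {3, 5, 7, 13}"
  shows False
proof -
  obtain p q where q: "q > 0" and cop: "coprime p q" and x_eq: "x = of_int p / of_int q"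
    using x Rats_cases' by metis
  have "(of_int (p\<^sup>2) :: real) = of_int (N * q\<^sup>2)"
    using sq q unfolding x_eq by (simp add: field_simps)
  then have pq: "p\<^sup>2 = N * q\<^sup>2"
    by (simp only: of_int_eq_iff)
  then have "q dvd p\<^sup>2"
    by (simp add: power2_eq_square)
  moreover have "coprime q (p\<^sup>2)"
    using cop by (simp add: coprime_commute)
  ultimately have "q = 1"
    using q coprime_common_divisor[OF _ dvd_refl] by fastforce
  then show False
    using pq N int_square_not_3_5_7_13[of p N] by simp
qed

definition int_spaced :: "real \<Rightarrow> real set \<Rightarrow> bool" where
  "int_spaced g S \<longleftrightarrow> (\<forall>x\<in>S. \<forall>y\<in>S. \<exists>k::int. x - y = of_int k * g)"

lemma rational_of_int_multiples:
  fixes g c q s :: real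
  assumes g: "g \<noteq> 0" and c: "c \<in> \<rat>" and q: "q \<in> \<rat>" and cq: "3 - c - q \<noteq> 0"
    and m: "2 * s = of_int m * g" and k: "3 - c + s - q = of_int k * g"
  shows "s \<in> \<rat>"
proof -
  have e: "3 - c - q = (of_int k - of_int m / 2) * g"
    using m k by (simp add: algebra_simps)
  then have ne: "of_int k - of_int m / 2 \<noteq> (0::real)"
    using cq by auto
  have "g = (3 - c - q) / (of_int k - of_int m / 2)"
    using e ne by (simp add: field_simps)
  also have "\<dots> \<in> \<rat>"
    using c q by (intro Rats_divide Rats_diff Rats_of_int) auto
  finally have "of_int m * g / 2 \<in> \<rat>"
    by (intro Rats_divide Rats_mult) auto
  moreover have "s = of_int m * g / 2"
    using m by linarith
  ultimately show ?thesis
    by metis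
qed

text \<open>Both \<open>c' - c\<close> and \<open>c + c' = (s\<^sup>2 - s'\<^sup>2) / (c - c')\<close> are rational multiples of \<open>g\<close>.\<close>

lemma rational_multiple_of_two_int_multiples:
  fixes g c c' s s' :: real
  assumes g: "g \<noteq> 0" and s: "s\<^sup>2 = 3 + c\<^sup>2" and s': "s'\<^sup>2 = 3 + c'\<^sup>2" and "c \<noteq> c'"
    and m: "2 * s = of_int m * g" and m': "2 * s' = of_int m' * g"
    and k: "(3 - c + s) - (3 - c' + s') = of_int k * g"
  obtains \<mu> where "\<mu> \<in> \<rat>" "c = \<mu> * g"
proof -
  have sm: "s = of_int m * g / 2" and sm': "s' = of_int m' * g / 2"
    using m m' by linarith+
  define r where "r = of_int k - (of_int m - of_int m') / (2::real)"
  have r: "c' - c = r * g"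
    using k unfolding sm sm' r_def by (simp add: field_simps)
  have r0: "r \<noteq> 0"
    using r \<open>c \<noteq> c'\<close> by auto
  have "- r * g * (c + c') = (c - c') * (c + c')"
    using r by (metis minus_diff_eq mult_minus_left)
  also have "\<dots> = s\<^sup>2 - s'\<^sup>2"
    using s s' by (simp add: algebra_simps power2_eq_square)
  also have "\<dots> = (of_int m ^ 2 - of_int m' ^ 2) * g\<^sup>2 / 4"
    unfolding sm sm' by (simp add: power_mult_distrib power_divide algebra_simps)
  finally have h: "- r * g * (c + c') = (of_int m ^ 2 - of_int m' ^ 2) * g\<^sup>2 / 4" .
  have "c + c' = (- r * g * (c + c')) / (- r * g)"
    using g r0 by simp
  also have "\<dots> = - (of_int m ^ 2 - of_int m' ^ 2) / (4 * r) * g"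
    unfolding h using g r0 by (simp add: field_simps power2_eq_square)
  finally have sum: "c + c' = - (of_int m ^ 2 - of_int m' ^ 2) / (4 * r) * g" .
  define A where "A = - (of_int m ^ 2 - of_int m' ^ 2) / (4 * r)"
  define \<mu> where "\<mu> = (A - r) / 2"
  have "\<mu> * g = (A * g - r * g) / 2"
    by (simp add: \<mu>_def algebra_simps)
  moreover have "2 * c = A * g - r * g"
    using r sum unfolding A_def by linarith
  ultimately have "c = \<mu> * g"
    by (simp add: field_simps)
  moreover have "\<mu> \<in> \<rat>"
    by (simp add: \<mu>_def A_def r_def)
  ultimately show ?thesis
    using that by blast
qed

lemma rational_of_two_int_multiples:
  fixes g c c' s s' :: real
  assumes g: "g \<noteq> 0" and s: "s\<^sup>2 = 3 + c\<^sup>2" and s': "s'\<^sup>2 = 3 + c'\<^sup>2" and "c \<noteq> c'"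
    and m: "2 * s = of_int m * g" and m': "2 * s' = of_int m' * g"
    and k: "(3 - c + s) - (3 - c' + s') = of_int k * g"
  shows "c\<^sup>2 \<in> \<rat>" and "s / c \<in> \<rat>"
proof -
  obtain \<mu> where "\<mu> \<in> \<rat>" and c: "c = \<mu> * g"
    using rational_multiple_of_two_int_multiples[OF assms] .
  have sm: "s = of_int m * g / 2"
    using m by linarith
  have "3 = s\<^sup>2 - c\<^sup>2"
    using s by simp
  also have "\<dots> = (of_int m ^ 2 / 4 - \<mu>\<^sup>2) * g\<^sup>2"
    unfolding sm c by (simp add: power_mult_distrib power_divide algebra_simps)
  finally have g2: "g\<^sup>2 = 3 / (of_int m ^ 2 / 4 - \<mu>\<^sup>2)"
    by (cases "of_int m ^ 2 / 4 - \<mu>\<^sup>2 = (0::real)") (simp_all add: field_simps)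
  show "c\<^sup>2 \<in> \<rat>"
    unfolding c power_mult_distrib g2 using \<open>\<mu> \<in> \<rat>\<close> by simp
  have "s / c = of_int m / (2 * \<mu>)"
    using g unfolding sm c by simp
  then show "s / c \<in> \<rat>"
    using \<open>\<mu> \<in> \<rat>\<close> by simp
qed

text \<open>For \<open>n \<ge> 5\<close>: a rational \<open>c\<^sup>2\<close> makes \<open>2 cos (4\<pi>/n) = 2 (2c\<^sup>2 - 1)\<close> an integer, so
  \<open>c\<^sup>2 \<in> {1/4, 1/2, 3/4}\<close> and \<open>(s/c)\<^sup>2 = 1 + 3/c\<^sup>2 \<in> {13, 7, 5}\<close>.\<close>

lemma root_disc_div_root_cos_irrational:
  assumes n: "5 \<le> n" and c2: "(root_cos n 1)\<^sup>2 \<in> \<rat>"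
  shows "root_disc n 1 / root_cos n 1 \<notin> \<rat>"
proof
  define c where "c = root_cos n 1"
  assume sc: "root_disc n 1 / root_cos n 1 \<in> \<rat>"
  have "2 * pi / real n \<le> 2 * pi / 5"
    using n by (intro divide_left_mono) auto
  also have "\<dots> < pi / 2"
    by simp
  finally have "0 < c"
    unfolding c_def root_cos_def using n by (intro cos_gt_zero) auto
  moreover have "c < 1"
    using root_cos_bounds[of 1 n] n by (simp add: c_def)
  ultimately have c2_bounds: "0 < c\<^sup>2" "c\<^sup>2 < 1"
    by (simp_all add: power_less_one_iff)
  have "2 * cos (2 * pi * real 2 / real n) = 2 * (2 * c\<^sup>2 - 1)"
    using cos_double_cos[of "2 * pi / real n"] by (simp add: c_def root_cos_def mult_ac)
  also have "\<dots> \<in> \<rat>"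
    using c2 by (simp add: c_def)
  finally have "2 * (2 * c\<^sup>2 - 1) \<in> \<int>"
    using two_cos_rational_imp_int[of n 2] n \<open>2 * cos _ = _\<close> by simp
  then obtain z :: int where z: "2 * (2 * c\<^sup>2 - 1) = of_int z"
    by (metis Ints_cases)
  then have "of_int z = 4 * c\<^sup>2 - 2"
    by simp
  then have "-2 < (of_int z :: real)" "(of_int z :: real) < 2"
    using c2_bounds by simp_all
  then have "-2 < z" "z < 2"
    by simp_all
  then have "z \<in> {-1, 0, 1}"
    by auto
  then have "c\<^sup>2 \<in> {1/4, 1/2, 3/4}"
    using z by auto
  moreover have "(root_disc n 1 / c)\<^sup>2 = 1 + 3 / c\<^sup>2"
    using root_disc_sq[of n 1] \<open>0 < c\<close> by (simp add: c_def power_divide field_simps)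
  ultimately have "(root_disc n 1 / c)\<^sup>2 \<in> {of_int 13, of_int 7, of_int 5}"
    by fastforce
  then show False
    using Rats_square_not_3_5_7_13[OF sc[folded c_def]] by auto
qed

lemma root_disc_irrational:
  assumes c: "root_cos n j \<in> {-1/2, 0, 1/2}"
  shows "root_disc n j \<notin> \<rat>"
proof
  assume "root_disc n j \<in> \<rat>"
  then have "2 * root_disc n j \<in> \<rat>"
    by simp
  have "\<forall>x\<in>{-1/2, 0, 1/2::real}. x = 0 \<or> (2 * x)\<^sup>2 = 1"
    by (simp add: power2_eq_square)
  then have "root_cos n j = 0 \<or> (2 * root_cos n j)\<^sup>2 = 1"
    using c by blast
  then show False
  proof
    assume "root_cos n j = 0"
    then have "(root_disc n j)\<^sup>2 = of_int 3"
      using root_disc_sq[of n j] by simp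
    then show False
      using Rats_square_not_3_5_7_13[OF \<open>root_disc n j \<in> \<rat>\<close>] by auto
  next
    assume "(2 * root_cos n j)\<^sup>2 = 1"
    then have "(2 * root_disc n j)\<^sup>2 = of_int 13"
      using root_disc_sq[of n j] by (simp add: power_mult_distrib)
    then show False
      using Rats_square_not_3_5_7_13[OF \<open>2 * root_disc n j \<in> \<rat>\<close>] by auto
  qed
qed

lemma not_int_spaced_two_root_modes:
  assumes n: "5 \<le> n" and g: "g \<noteq> 0" and c: "root_cos n 1 \<noteq> root_cos n j"
    and S: "root_eig n 1 1 \<in> S" "root_eig n 1 (-1) \<in> S" "root_eig n j 1 \<in> S" "root_eig n j (-1) \<in> S"
  shows "\<not> int_spaced g S"
proof
  assume "int_spaced g S"
  then obtain m m' k :: int where m: "2 * root_disc n 1 = of_int m * g" "2 * root_disc n j = of_int m' * g"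
    and "root_eig n 1 1 - root_eig n j 1 = of_int k * g"
    using S unfolding int_spaced_def root_eig_diff[symmetric] by meson
  then have "(3 - root_cos n 1 + root_disc n 1) - (3 - root_cos n j + root_disc n j) = of_int k * g"
    by (simp add: root_eig_def)
  then have "(root_cos n 1)\<^sup>2 \<in> \<rat>" "root_disc n 1 / root_cos n 1 \<in> \<rat>"
    by (rule rational_of_two_int_multiples[OF g root_disc_sq root_disc_sq c m])+
  then show False
    using root_disc_div_root_cos_irrational[OF n] by blast
qed

lemma not_int_spaced_root_mode_rational:
  assumes g: "g \<noteq> 0" and c: "root_cos n 1 \<in> {-1/2, 0, 1/2}" and q: "q \<in> \<rat>" "3 - root_cos n 1 - q \<noteq> 0"
    and S: "root_eig n 1 1 \<in> S" "root_eig n 1 (-1) \<in> S" "q \<in> S"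
  shows "\<not> int_spaced g S"
proof
  assume "int_spaced g S"
  then obtain m k :: int where m: "2 * root_disc n 1 = of_int m * g" and "root_eig n 1 1 - q = of_int k * g"
    using S unfolding int_spaced_def root_eig_diff[symmetric] by meson
  then have k: "3 - root_cos n 1 + root_disc n 1 - q = of_int k * g"
    by (simp add: root_eig_def)
  have "\<forall>x\<in>{-1/2, 0, 1/2::real}. x \<in> \<rat>"
    by simp
  then have "root_cos n 1 \<in> \<rat>"
    using c by blast
  then have "root_disc n 1 \<in> \<rat>"
    using rational_of_int_multiples[OF g _ q m k] by simp
  then show False
    using root_disc_irrational[OF c] by blast
qed

section \<open>Eigenvalue supports of pair states\<close>

definition pair_support :: "nat \<Rightarrow> nat + nat set \<Rightarrow> nat + nat set \<Rightarrow> real set" where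
  "pair_support n a b =
     {\<theta>. \<exists>X Y w. mode_equations n X Y w \<theta> \<and> cyc_mode n X Y w a \<noteq> cyc_mode n X Y w b}"

lemma pair_support_commute: "pair_support n a b = pair_support n b a"
  unfolding pair_support_def by metis

lemma root_eig_in_pair_support_Inl:
  assumes n: "3 \<le> n" and c: "root_cos n j \<noteq> -1" and \<sigma>: "\<bar>\<sigma>\<bar> = 1"
    and ik: "root_unity n j ^ i \<noteq> root_unity n j ^ k"
  shows "root_eig n j \<sigma> \<in> pair_support n (Inl i) (Inl k)"
proof -
  let ?w = "root_unity n j" and ?Y = "complex_of_real (2 - root_eig n j \<sigma>)"
  have "mode_equations n (1 + cnj ?w) ?Y ?w (root_eig n j \<sigma>)"
    using n by (intro mode_equations_root[OF _ \<sigma> refl]) simp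
  moreover have "cyc_mode n (1 + cnj ?w) ?Y ?w (Inl i) \<noteq> cyc_mode n (1 + cnj ?w) ?Y ?w (Inl k)"
    using one_plus_cnj_root_unity_neq_0[OF c] ik by simp
  ultimately show ?thesis
    unfolding pair_support_def by blast
qed

lemma root_eig_in_pair_support_Inr:
  assumes n: "3 \<le> n" and ik: "i < n" "k < n" and c: "root_cos n j \<noteq> -1" and \<sigma>: "\<bar>\<sigma>\<bar> = 1"
    and w: "root_unity n j ^ i \<noteq> root_unity n j ^ k"
  shows "root_eig n j \<sigma> \<in> pair_support n (Inr (cyc_edge n i)) (Inr (cyc_edge n k))"
proof -
  let ?w = "root_unity n j" and ?Y = "complex_of_real (2 - root_eig n j \<sigma>)"
  have "mode_equations n (1 + cnj ?w) ?Y ?w (root_eig n j \<sigma>)"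
    using n by (intro mode_equations_root[OF _ \<sigma> refl]) simp
  moreover have "2 - root_eig n j \<sigma> \<noteq> 0"
    using root_eig_neq_2[OF \<sigma> c] by simp
  then have "?Y \<noteq> 0"
    by (simp only: of_real_eq_0_iff not_False_eq_True)
  then have "cyc_mode n (1 + cnj ?w) ?Y ?w (Inr (cyc_edge n i)) \<noteq> cyc_mode n (1 + cnj ?w) ?Y ?w (Inr (cyc_edge n k))"
    using n ik w by (simp only: cyc_mode_Inr mult_left_cancel) simp
  ultimately show ?thesis
    unfolding pair_support_def by blast
qed

lemma root_eig_in_pair_support_mixed:
  assumes n: "3 \<le> n" and k: "k < n" and c: "root_cos n j \<noteq> 1" "root_cos n j \<noteq> -1"
    and \<sigma>: "\<bar>\<sigma>\<bar> = 1"
  shows "root_eig n j \<sigma> \<in> pair_support n (Inl i) (Inr (cyc_edge n k))"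
proof -
  let ?w = "root_unity n j" and ?Y = "complex_of_real (2 - root_eig n j \<sigma>)"
  have "mode_equations n (1 + cnj ?w) ?Y ?w (root_eig n j \<sigma>)"
    using n by (intro mode_equations_root[OF _ \<sigma> refl]) simp
  moreover have "cyc_mode n (1 + cnj ?w) ?Y ?w (Inl i) \<noteq> cyc_mode n (1 + cnj ?w) ?Y ?w (Inr (cyc_edge n k))"
  proof
    assume "cyc_mode n (1 + cnj ?w) ?Y ?w (Inl i) = cyc_mode n (1 + cnj ?w) ?Y ?w (Inr (cyc_edge n k))"
    then have "(1 + cnj ?w) * ?w ^ i = ?Y * ?w ^ k"
      using n k by (simp only: cyc_mode_Inl cyc_mode_Inr)
    then have "cmod (1 + cnj ?w) = cmod ?Y"
      by (metis norm_mult norm_power norm_cis root_unity_def power_one mult_1_right)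
    also have "\<dots> = \<bar>2 - root_eig n j \<sigma>\<bar>"
      by (rule norm_of_real)
    finally show False
      using norm_root_mode_coeffs_neq[OF \<sigma> c] by blast
  qed
  ultimately show ?thesis
    unfolding pair_support_def by blast
qed

lemma const_eig_in_pair_support_mixed:
  assumes "3 \<le> n" "k < n"
  shows "4 \<in> pair_support n (Inl i) (Inr (cyc_edge n k))"
proof -
  have "mode_equations n 1 (-1) 1 4"
    using assms by (intro mode_equations_const) simp
  moreover have "cyc_mode n 1 (-1) 1 (Inl i) \<noteq> cyc_mode n 1 (-1) 1 (Inr (cyc_edge n k))"
    using assms by (simp add: cyc_mode_Inr)
  ultimately show ?thesis
    unfolding pair_support_def by blast
qed

lemma neg_one_power_neq: "odd (int i - int k) \<Longrightarrow> (-1::complex) ^ i \<noteq> (-1) ^ k"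
  by (cases "even i") auto

lemma alternating_eig_in_pair_support_Inl:
  assumes "even n" "0 < n" "odd (int i - int k)"
  shows "2 \<in> pair_support n (Inl i) (Inl k)"
proof -
  have "cyc_mode n 1 0 (-1) (Inl i) \<noteq> cyc_mode n 1 0 (-1) (Inl k)"
    using neg_one_power_neq[OF assms(3)] by simp
  then show ?thesis
    using mode_equations_alternating_verts[OF assms(1,2)] unfolding pair_support_def by blast
qed

lemma alternating_eig_in_pair_support_Inr:
  assumes "3 \<le> n" "i < n" "k < n" "even n" "odd (int i - int k)"
  shows "6 \<in> pair_support n (Inr (cyc_edge n i)) (Inr (cyc_edge n k))"
proof -
  have "cyc_mode n 0 1 (-1) (Inr (cyc_edge n i)) \<noteq> cyc_mode n 0 1 (-1) (Inr (cyc_edge n k))"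
    using neg_one_power_neq[OF assms(5)] assms(1-3) by (simp add: cyc_mode_Inr)
  moreover have "mode_equations n 0 1 (-1) 6"
    using assms(1,4) by (intro mode_equations_alternating_edges) simp_all
  ultimately show ?thesis
    unfolding pair_support_def by blast
qed

lemma dvd_double_diff_imp:
  fixes i k :: nat
  assumes "i < n" "k < n" "i \<noteq> k" "int n dvd 2 * (int i - int k)"
  shows "int n = 2 * \<bar>int i - int k\<bar>"
proof -
  obtain m where m: "2 * (int i - int k) = int n * m"
    using assms(4) by (rule dvdE)
  then have a: "\<bar>m\<bar> * int n = 2 * \<bar>int i - int k\<bar>"
    by (metis abs_mult abs_of_nat abs_numeral mult.commute)
  have "\<bar>int i - int k\<bar> < int n"
    using assms(1,2) by linarith
  then have "\<bar>m\<bar> * int n < 2 * int n"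
    unfolding a by simp
  then have "\<bar>m\<bar> < 2"
    by (simp add: mult_less_cancel_right)
  moreover have "m \<noteq> 0"
    using m assms(3) by auto
  ultimately have "\<bar>m\<bar> = 1"
    by linarith
  then show ?thesis
    using a by simp
qed

lemma not_dvd_triple:
  fixes d :: int
  assumes "n = 2 * \<bar>d\<bar>" "d \<noteq> 0"
  shows "\<not> n dvd 3 * d"
proof
  assume "n dvd 3 * d"
  then obtain m where "3 * d = n * m"
    by (rule dvdE)
  have "3 * \<bar>d\<bar> = \<bar>3 * d\<bar>"
    by (simp add: abs_mult)
  also have "\<dots> = \<bar>m\<bar> * \<bar>n\<bar>"
    using \<open>3 * d = n * m\<close> by (simp add: abs_mult)
  also have "\<dots> = (2 * \<bar>m\<bar>) * \<bar>d\<bar>"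
    using assms(1) by (simp add: abs_mult)
  finally have "3 * \<bar>d\<bar> = (2 * \<bar>m\<bar>) * \<bar>d\<bar>" .
  then have "3 = 2 * \<bar>m\<bar>"
    using assms(2) by simp
  then show False
    by presburger
qed

lemma second_distinguishing_root:
  assumes n: "5 \<le> n" and ik: "i < n" "k < n" "i \<noteq> k"
  obtains (root) j where "1 < j" "2 * j < n" "root_unity n j ^ i \<noteq> root_unity n j ^ k"
    | (hexagon) "n = 6" "odd (int i - int k)"
proof (cases "root_unity n 2 ^ i = root_unity n 2 ^ k")
  case False
  then show ?thesis
    using n that(1)[of 2] by simp
next
  case True
  then have "int n dvd 2 * (int i - int k)"
    using root_unity_power_eq_imp_dvd[of n 2 i k] n by simp
  then have n_eq: "int n = 2 * \<bar>int i - int k\<bar>"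
    by (rule dvd_double_diff_imp[OF ik])
  show ?thesis
  proof (cases "n = 6")
    case True
    then have "odd (int i - int k)"
      using n_eq by presburger
    then show ?thesis
      using True that(2) by blast
  next
    case False
    then have "7 < n"
      using n n_eq by presburger
    moreover have "root_unity n 3 ^ i \<noteq> root_unity n 3 ^ k"
      using root_unity_power_eq_imp_dvd[of n 3 i k] not_dvd_triple[OF n_eq] ik n by auto
    ultimately show ?thesis
      using that(1)[of 3] by simp
  qed
qed

lemma root_eig_in_pair_support_mixed_pm:
  assumes "3 \<le> n" "k < n" "0 < j" "2 * j < n"
  shows "root_eig n j 1 \<in> pair_support n (Inl i) (Inr (cyc_edge n k))"
    and "root_eig n j (-1) \<in> pair_support n (Inl i) (Inr (cyc_edge n k))"
  using root_eig_in_pair_support_mixed[OF assms(1,2)] root_cos_bounds[OF assms(3,4)] by simp_all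

lemma not_int_spaced_pair_support_mixed:
  assumes n: "3 \<le> n" and g: "g \<noteq> 0" and k: "k < n"
  shows "\<not> int_spaced g (pair_support n (Inl i) (Inr (cyc_edge n k)))"
proof -
  note roots = root_eig_in_pair_support_mixed_pm[OF n k]
  note anchor = not_int_spaced_root_mode_rational[OF g _ _ _ roots[of 1] const_eig_in_pair_support_mixed[OF n k]]
  consider "n = 3" | "n = 4" | "5 \<le> n"
    using n by linarith
  then show ?thesis
  proof cases
    case 1
    then show ?thesis
      using anchor root_cos_values by simp
  next
    case 2
    then show ?thesis
      using anchor root_cos_values by simp
  next
    case 3
    have "root_cos n 1 \<noteq> root_cos n 2"
      using root_cos_inj[of 1 n 2] 3 by auto
    then show ?thesis
      using not_int_spaced_two_root_modes[OF 3 g] roots[of 1] roots[of 2] 3 by simp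
  qed
qed

lemma not_int_spaced_same_kind:
  assumes n: "4 \<le> n" and g: "g \<noteq> 0" and ik: "i < n" "k < n" "i \<noteq> k"
    and not_opposite: "\<not> (n = 4 \<and> (i = k + 2 \<or> k = i + 2))"
    and roots: "\<And>j \<sigma>. root_cos n j \<noteq> -1 \<Longrightarrow> root_unity n j ^ i \<noteq> root_unity n j ^ k \<Longrightarrow>
      \<bar>\<sigma>\<bar> = 1 \<Longrightarrow> root_eig n j \<sigma> \<in> S"
    and alternating: "even n \<Longrightarrow> odd (int i - int k) \<Longrightarrow> q \<in> S" and q: "q \<in> {2, 6}"
  shows "\<not> int_spaced g S"
proof -
  have roots_j: "root_eig n j 1 \<in> S" "root_eig n j (-1) \<in> S"
    if "0 < j" "2 * j < n" "root_unity n j ^ i \<noteq> root_unity n j ^ k" for j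
    using roots[of j] root_cos_bounds[OF that(1,2)] that(3) by auto
  have roots_1: "root_eig n 1 1 \<in> S" "root_eig n 1 (-1) \<in> S"
    using roots_j[of 1] root_unity_power_inj[OF ik(1,2)] ik(3) n by auto
  have anchor: "\<not> int_spaced g S" if "root_cos n 1 \<in> {0, 1/2}" "even n" "odd (int i - int k)"
    using not_int_spaced_root_mode_rational[OF g _ _ _ roots_1 alternating[OF that(2,3)]] that(1) q
    by auto
  consider "n = 4" | "5 \<le> n"
    using n by linarith
  then show ?thesis
  proof cases
    case 1
    then have "odd (int i - int k)"
      using ik not_opposite by presburger
    then show ?thesis
      using anchor root_cos_values 1 by simp
  next
    case 2
    consider (root) j where "1 < j" "2 * j < n" "root_unity n j ^ i \<noteq> root_unity n j ^ k"
      | (hexagon) "n = 6" "odd (int i - int k)"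
      using second_distinguishing_root[OF 2 ik] by blast
    then show ?thesis
    proof cases
      case (root j)
      have "root_cos n 1 \<noteq> root_cos n j"
        using root_cos_inj[of 1 n j] root 2 by auto
      then show ?thesis
        using not_int_spaced_two_root_modes[OF 2 g] roots_1 roots_j[of j] root by simp
    next
      case hexagon
      then show ?thesis
        using anchor root_cos_values by simp
    qed
  qed
qed

definition exceptional_pair :: "nat \<Rightarrow> nat + nat set \<Rightarrow> nat + nat set \<Rightarrow> bool" where
  "exceptional_pair n a b \<longleftrightarrow> (\<exists>i k. i < n \<and> k < n \<and> i \<noteq> k \<and>
     (n = 3 \<or> n = 4 \<and> (i = k + 2 \<or> k = i + 2)) \<and>
     (a = Inl i \<and> b = Inl k \<or> a = Inr (cyc_edge n i) \<and> b = Inr (cyc_edge n k)))"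

lemma not_int_spaced_pair_support:
  assumes n: "3 \<le> n" and g: "g \<noteq> 0" and ab: "a \<in> QC_verts n" "b \<in> QC_verts n" "a \<noteq> b"
    and not_exc: "\<not> exceptional_pair n a b"
  shows "\<not> int_spaced g (pair_support n a b)"
proof -
  have same_kind: "n \<noteq> 3 \<and> \<not> (n = 4 \<and> (i = k + 2 \<or> k = i + 2))"
    if "a = Inl i \<and> b = Inl k \<or> a = Inr (cyc_edge n i) \<and> b = Inr (cyc_edge n k)" "i < n" "k < n" "i \<noteq> k"
    for i k
    using not_exc that unfolding exceptional_pair_def by blast
  from ab(1) show ?thesis
  proof (cases rule: QC_verts_cases)
    case (Inl i)
    from ab(2) show ?thesis
    proof (cases rule: QC_verts_cases)
      case (Inl k)
      with \<open>a = Inl i\<close> ab(3) have "i \<noteq> k" by auto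
      with same_kind[of i k] Inl \<open>a = Inl i\<close> \<open>i < n\<close> n show ?thesis
        by (intro not_int_spaced_same_kind[OF _ g \<open>i < n\<close> \<open>k < n\<close>, where q = 2])
          (auto intro: root_eig_in_pair_support_Inl alternating_eig_in_pair_support_Inl)
    next
      case (Inr k)
      then show ?thesis
        using not_int_spaced_pair_support_mixed[OF n g] \<open>a = Inl i\<close> by simp
    qed
  next
    case (Inr i)
    from ab(2) show ?thesis
    proof (cases rule: QC_verts_cases)
      case (Inl k)
      then show ?thesis
        using not_int_spaced_pair_support_mixed[OF n g] \<open>a = Inr (cyc_edge n i)\<close> \<open>i < n\<close>
        by (simp add: pair_support_commute)
    next
      case (Inr k)
      with \<open>a = Inr (cyc_edge n i)\<close> ab(3) have "i \<noteq> k" by auto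
      with same_kind[of i k] Inr \<open>a = Inr (cyc_edge n i)\<close> \<open>i < n\<close> n show ?thesis
        by (intro not_int_spaced_same_kind[OF _ g \<open>i < n\<close> \<open>k < n\<close>, where q = 6])
          (auto intro: root_eig_in_pair_support_Inr alternating_eig_in_pair_support_Inr)
    qed
  qed
qed

section \<open>Exceptional pairs\<close>

lemma cyc_mode_diff_Inl: "cyc_mode n X Y w (Inl i) - cyc_mode n X Y w (Inl k) = X * (w ^ i - w ^ k)"
  by (simp add: right_diff_distrib)

lemma cyc_mode_diff_Inr:
  "3 \<le> n \<Longrightarrow> i < n \<Longrightarrow> k < n \<Longrightarrow>
    cyc_mode n X Y w (Inr (cyc_edge n i)) - cyc_mode n X Y w (Inr (cyc_edge n k)) = Y * (w ^ i - w ^ k)"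
  by (simp add: cyc_mode_Inr right_diff_distrib)

lemma const_mode_eq_imp_same_kind:
  assumes n: "3 \<le> n" and cd: "c \<in> QC_verts n" "d \<in> QC_verts n" "c \<noteq> d"
    and eq: "cyc_mode n 1 (-1) 1 c = cyc_mode n 1 (-1) 1 d"
  obtains l m where "l < n" "m < n" "l \<noteq> m"
    "c = Inl l \<and> d = Inl m \<or> c = Inr (cyc_edge n l) \<and> d = Inr (cyc_edge n m)"
proof -
  from cd(1) show ?thesis
  proof (cases rule: QC_verts_cases)
    case (Inl l)
    from cd(2) show ?thesis
    proof (cases rule: QC_verts_cases)
      case (Inl m)
      then show ?thesis using \<open>c = Inl l\<close> \<open>l < n\<close> cd(3) that by auto
    next
      case (Inr m)
      then show ?thesis using \<open>c = Inl l\<close> eq n by (simp add: cyc_mode_Inr)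
    qed
  next
    case (Inr l)
    from cd(2) show ?thesis
    proof (cases rule: QC_verts_cases)
      case (Inl m)
      then show ?thesis using \<open>c = Inr (cyc_edge n l)\<close> \<open>l < n\<close> eq n by (simp add: cyc_mode_Inr)
    next
      case (Inr m)
      then show ?thesis using \<open>c = Inr (cyc_edge n l)\<close> \<open>l < n\<close> cd(3) that by auto
    qed
  qed
qed

lemma root_eig_edge_coeffs:
  assumes c: "-1 < root_cos n j" "root_cos n j < 1"
  shows "complex_of_real (2 - root_eig n j 1) \<noteq> 0"
    and "complex_of_real (2 - root_eig n j 1) \<noteq> complex_of_real (2 - root_eig n j (-1))"
    and "complex_of_real (2 - root_eig n j 1) \<noteq> - complex_of_real (2 - root_eig n j (-1))"
proof -
  show "complex_of_real (2 - root_eig n j 1) \<noteq> 0"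
    using root_eig_neq_2[of 1 n j] c by (simp only: of_real_eq_0_iff) simp
  have "root_eig n j 1 \<noteq> root_eig n j (-1)"
    using root_disc_pos[of n j] by (simp add: root_eig_def)
  then show "complex_of_real (2 - root_eig n j 1) \<noteq> complex_of_real (2 - root_eig n j (-1))"
    by (simp only: of_real_eq_iff)
  have "(2 - root_eig n j 1) + (2 - root_eig n j (-1)) \<noteq> 0"
    using c by (simp add: root_eig_def)
  then have "complex_of_real (2 - root_eig n j 1) + complex_of_real (2 - root_eig n j (-1)) \<noteq> 0"
    by (metis of_real_add of_real_eq_0_iff)
  then show "complex_of_real (2 - root_eig n j 1) \<noteq> - complex_of_real (2 - root_eig n j (-1))"
    by (metis add.commute neg_eq_iff_add_eq_0)
qed

lemma cross_kind_signs_impossible: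
  fixes X Yp Ym D D' ep em :: complex
  assumes Y: "Yp \<noteq> Ym" "Yp \<noteq> - Ym" and "D \<noteq> 0" and signs: "ep = 1 \<or> ep = -1" "em = 1 \<or> em = -1"
  shows "X \<noteq> 0 \<Longrightarrow> Yp * D' = ep * (X * D) \<Longrightarrow> Ym * D' = em * (X * D) \<Longrightarrow> False"
    and "X * D' = ep * (Yp * D) \<Longrightarrow> X * D' = em * (Ym * D) \<Longrightarrow> False"
proof -
  have no_signed_eq: "e * Yp \<noteq> e' * Ym" if "e = 1 \<or> e = -1" "e' = 1 \<or> e' = -1" for e e'
    using that Y by auto
  show False if "X \<noteq> 0" "Yp * D' = ep * (X * D)" "Ym * D' = em * (X * D)"
  proof -
    have "D' \<noteq> 0"
      using that \<open>D \<noteq> 0\<close> signs by auto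
    moreover have "em * (Yp * D') = ep * (Ym * D')"
      using that by (metis mult.left_commute)
    ultimately show False
      using no_signed_eq[OF signs(2,1)] by (simp add: mult.assoc[symmetric])
  qed
  show False if "X * D' = ep * (Yp * D)" "X * D' = em * (Ym * D)"
    using that \<open>D \<noteq> 0\<close> no_signed_eq[OF signs] by (simp add: mult.assoc[symmetric])
qed

text \<open>The two eigenvectors for \<open>w = root_unity n 1\<close> share the vertex coefficient \<open>X\<close> but have
  edge coefficients \<open>Y\<^sub>+ \<noteq> \<plusminus>Y\<^sub>-\<close>; this rules out a pair of vertices being traded for a pair of edges.\<close>

lemma root_mode_signs_imp:
  assumes n: "3 \<le> n" and idx: "i < n" "k < n" "l < n" "m < n" "i \<noteq> k"
    and ab: "a = Inl i \<and> b = Inl k \<or> a = Inr (cyc_edge n i) \<and> b = Inr (cyc_edge n k)"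
    and cd: "c = Inl l \<and> d = Inl m \<or> c = Inr (cyc_edge n l) \<and> d = Inr (cyc_edge n m)"
    and sign: "\<And>X Y w \<theta>. mode_equations n X Y w \<theta> \<Longrightarrow>
      \<exists>e. (e = 1 \<or> e = -1) \<and> cyc_mode n X Y w c - cyc_mode n X Y w d = e * (cyc_mode n X Y w a - cyc_mode n X Y w b)"
  shows "isl a = isl c \<and> (\<exists>e. (e = 1 \<or> e = -1) \<and>
    root_unity n 1 ^ l - root_unity n 1 ^ m = e * (root_unity n 1 ^ i - root_unity n 1 ^ k))"
proof -
  define W where "W = root_unity n 1"
  define X where "X = 1 + cnj W"
  define Yp where "Yp = complex_of_real (2 - root_eig n 1 1)"
  define Ym where "Ym = complex_of_real (2 - root_eig n 1 (-1))"
  define D where "D = W ^ i - W ^ k"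
  define D' where "D' = W ^ l - W ^ m"
  have c1: "-1 < root_cos n 1" "root_cos n 1 < 1"
    using root_cos_bounds[of 1 n] n by auto
  have "X \<noteq> 0" "D \<noteq> 0"
    using one_plus_cnj_root_unity_neq_0[of n 1] c1 root_unity_power_inj[OF idx(1,2)] idx(5)
    by (auto simp: X_def W_def D_def)
  have "Yp \<noteq> 0" and Y_neq: "Yp \<noteq> Ym" "Yp \<noteq> - Ym"
    unfolding Yp_def Ym_def by (rule root_eig_edge_coeffs[OF c1])+
  have "mode_equations n X Yp W (root_eig n 1 1)" "mode_equations n X Ym W (root_eig n 1 (-1))"
    unfolding X_def Yp_def Ym_def W_def using n by (intro mode_equations_root; simp)+
  then obtain ep em where ep: "ep = 1 \<or> ep = -1" and em: "em = 1 \<or> em = -1"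
    and diff_p: "cyc_mode n X Yp W c - cyc_mode n X Yp W d = ep * (cyc_mode n X Yp W a - cyc_mode n X Yp W b)"
    and diff_m: "cyc_mode n X Ym W c - cyc_mode n X Ym W d = em * (cyc_mode n X Ym W a - cyc_mode n X Ym W b)"
    using sign by meson
  note diffs = cyc_mode_diff_Inl cyc_mode_diff_Inr[OF n idx(1,2)] cyc_mode_diff_Inr[OF n idx(3,4)]
  from ab cd show ?thesis
  proof (elim disjE conjE)
    assume "a = Inl i" "b = Inl k" "c = Inl l" "d = Inl m"
    then have "X * D' = X * (ep * D)"
      using diff_p by (simp only: diffs D_def D'_def mult.left_commute)
    then show ?thesis
      using \<open>X \<noteq> 0\<close> ep \<open>a = Inl i\<close> \<open>c = Inl l\<close> by (auto simp: D_def D'_def W_def)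
  next
    assume "a = Inr (cyc_edge n i)" "b = Inr (cyc_edge n k)" "c = Inr (cyc_edge n l)" "d = Inr (cyc_edge n m)"
    then have "Yp * D' = Yp * (ep * D)"
      using diff_p by (simp only: diffs D_def D'_def mult.left_commute)
    then show ?thesis
      using \<open>Yp \<noteq> 0\<close> ep \<open>a = Inr _\<close> \<open>c = Inr _\<close> by (auto simp: D_def D'_def W_def)
  next
    assume "a = Inl i" "b = Inl k" "c = Inr (cyc_edge n l)" "d = Inr (cyc_edge n m)"
    then have "Yp * D' = ep * (X * D)" "Ym * D' = em * (X * D)"
      using diff_p diff_m by (simp_all only: diffs D_def D'_def)
    then show ?thesis
      using cross_kind_signs_impossible(1)[OF Y_neq \<open>D \<noteq> 0\<close> ep em \<open>X \<noteq> 0\<close>] by blast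
  next
    assume "a = Inr (cyc_edge n i)" "b = Inr (cyc_edge n k)" "c = Inl l" "d = Inl m"
    then have "X * D' = ep * (Yp * D)" "X * D' = em * (Ym * D)"
      using diff_p diff_m by (simp_all only: diffs D_def D'_def)
    then show ?thesis
      using cross_kind_signs_impossible(2)[OF Y_neq \<open>D \<noteq> 0\<close> ep em] by blast
  qed
qed

lemma root_unity_3_powers:
  "root_unity 3 1 ^ 0 = 1" "root_unity 3 1 ^ 1 = Complex (-1/2) (sqrt 3 / 2)"
  "root_unity 3 1 ^ 2 = Complex (-1/2) (- sqrt 3 / 2)"
proof -
  have angle: "2 * pi * real 1 / real 3 = pi - pi / 3"
    by simp
  have "cos (pi - pi / 3) = - 1/2" "sin (pi - pi / 3) = sqrt 3 / 2"
    unfolding cos_pi_minus sin_pi_minus cos_60 sin_60 by simp_all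
  then have w: "root_unity 3 1 = Complex (-1/2) (sqrt 3 / 2)"
    unfolding root_unity_def angle by (simp only: complex_eq_iff cis.sel complex.sel)
  show "root_unity 3 1 ^ 0 = 1" "root_unity 3 1 ^ 1 = Complex (-1/2) (sqrt 3 / 2)"
    "root_unity 3 1 ^ 2 = Complex (-1/2) (- sqrt 3 / 2)"
    unfolding w by (simp_all add: power2_eq_square complex_eq_iff)
qed

lemma root_unity_4_1: "root_unity 4 1 = \<i>"
proof -
  have "2 * pi * real 1 / real 4 = pi / 2"
    by simp
  then show ?thesis
    unfolding root_unity_def by simp
qed

lemma root_unity_diff_rigid_3:
  assumes "i < 3" "k < 3" "l < 3" "m < 3" "i \<noteq> k" "l \<noteq> m" "e = 1 \<or> e = -1"
    and eq: "root_unity 3 1 ^ l - root_unity 3 1 ^ m = e * (root_unity 3 1 ^ i - root_unity 3 1 ^ k)"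
  shows "l = i \<and> m = k \<or> l = k \<and> m = i"
proof -
  have cases3: "x < 3 \<Longrightarrow> x = 0 \<or> x = 1 \<or> x = (2::nat)" for x
    by auto
  have "sqrt 3 \<noteq> (0::real)"
    by simp
  with cases3[OF assms(1)] cases3[OF assms(2)] cases3[OF assms(3)] cases3[OF assms(4)] assms(5-7) eq
  show ?thesis
    by (elim disjE; simp only: root_unity_3_powers; simp add: complex_eq_iff)
qed

lemma root_unity_diff_rigid_4:
  assumes "i < 4" "k < 4" "l < 4" "m < 4" "i = k + 2 \<or> k = i + 2" "l \<noteq> m" "e = 1 \<or> e = -1"
    and eq: "root_unity 4 1 ^ l - root_unity 4 1 ^ m = e * (root_unity 4 1 ^ i - root_unity 4 1 ^ k)"
  shows "l = i \<and> m = k \<or> l = k \<and> m = i"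
proof -
  have cases4: "x < 4 \<Longrightarrow> x = 0 \<or> x = 1 \<or> x = 2 \<or> x = (3::nat)" for x
    by auto
  have powers: "\<i> ^ 2 = -1" "\<i> ^ 3 = -\<i>"
    by (simp_all add: power2_eq_square power3_eq_cube)
  have "i = 0 \<and> k = 2 \<or> i = 2 \<and> k = 0 \<or> i = 1 \<and> k = 3 \<or> i = 3 \<and> k = 1"
    using assms(1,2,5) by auto
  with cases4[OF assms(3)] cases4[OF assms(4)] assms(6,7) eq
  show ?thesis
    unfolding root_unity_4_1 by (elim disjE conjE; simp add: powers complex_eq_iff)
qed

lemma exceptional_pair_rigid:
  assumes exc: "exceptional_pair n a b" and cd: "c \<in> QC_verts n" "d \<in> QC_verts n" "c \<noteq> d"
    and sign: "\<And>X Y w \<theta>. mode_equations n X Y w \<theta> \<Longrightarrow>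
      \<exists>e. (e = 1 \<or> e = -1) \<and> cyc_mode n X Y w c - cyc_mode n X Y w d = e * (cyc_mode n X Y w a - cyc_mode n X Y w b)"
  shows "{a, b} = {c, d}"
proof -
  obtain i k where ik: "i < n" "k < n" "i \<noteq> k" and small: "n = 3 \<or> n = 4 \<and> (i = k + 2 \<or> k = i + 2)"
    and ab: "a = Inl i \<and> b = Inl k \<or> a = Inr (cyc_edge n i) \<and> b = Inr (cyc_edge n k)"
    using exc unfolding exceptional_pair_def by blast
  have n: "3 \<le> n"
    using small by auto
  have "cyc_mode n 1 (-1) 1 a - cyc_mode n 1 (-1) 1 b = 0"
    using ab n ik by (auto simp: cyc_mode_Inr)
  then have "cyc_mode n 1 (-1) 1 c = cyc_mode n 1 (-1) 1 d"
    using sign[OF mode_equations_const] n by auto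
  then obtain l m where lm: "l < n" "m < n" "l \<noteq> m"
    and cd_kind: "c = Inl l \<and> d = Inl m \<or> c = Inr (cyc_edge n l) \<and> d = Inr (cyc_edge n m)"
    by (rule const_mode_eq_imp_same_kind[OF n cd])
  have "isl a = isl c \<and> (\<exists>e. (e = 1 \<or> e = -1) \<and>
      root_unity n 1 ^ l - root_unity n 1 ^ m = e * (root_unity n 1 ^ i - root_unity n 1 ^ k))"
    by (rule root_mode_signs_imp[OF n ik(1,2) lm(1,2) ik(3) ab cd_kind]) (rule sign)
  then obtain e where "isl a = isl c" "e = 1 \<or> e = -1"
    and "root_unity n 1 ^ l - root_unity n 1 ^ m = e * (root_unity n 1 ^ i - root_unity n 1 ^ k)"
    by blast
  then have "l = i \<and> m = k \<or> l = k \<and> m = i"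
    using small root_unity_diff_rigid_3[of i k l m e] root_unity_diff_rigid_4[of i k l m e] ik lm by auto
  then show ?thesis
    using ab cd_kind \<open>isl a = isl c\<close> by auto
qed

lemma pair_transfer_int_spaced_support:
  assumes n: "3 \<le> n" and verts: "a \<in> QC_verts n" "b \<in> QC_verts n" "c \<in> QC_verts n" "d \<in> QC_verts n"
    and "a \<noteq> b" "c \<noteq> d" and chi: "cmod \<chi> = 1" and "\<tau> \<noteq> 0"
    and transfer: "\<And>x. x \<in> QC_verts n \<Longrightarrow>
      exp_evolve (QC_verts n) (laplacian (QC_verts n) Q_adj) \<tau> (pair_state a b) x = \<chi> * pair_state c d x"
  shows "int_spaced (pi / \<tau>) (pair_support n a b)"
  unfolding int_spaced_def
proof (intro ballI)
  fix \<theta> \<theta>'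
  assume "\<theta> \<in> pair_support n a b" "\<theta>' \<in> pair_support n a b"
  then obtain X Y w X' Y' w' where "mode_equations n X Y w \<theta>" "mode_equations n X' Y' w' \<theta>'"
    and "cyc_mode n X Y w a \<noteq> cyc_mode n X Y w b" "cyc_mode n X' Y' w' a \<noteq> cyc_mode n X' Y' w' b"
    unfolding pair_support_def by blast
  then obtain m :: int where "\<tau> * (\<theta> - \<theta>') = of_int m * pi"
    using pair_transfer_eigenvalue_gap[OF finite_QC_verts Q_adj_sym verts \<open>a \<noteq> b\<close> \<open>c \<noteq> d\<close> chi transfer
        cyc_mode_eigenvector[OF n] cyc_mode_eigenvector[OF n]]
    by blast
  then show "\<exists>k::int. \<theta> - \<theta>' = of_int k * (pi / \<tau>)"
    using \<open>\<tau> \<noteq> 0\<close> by (intro exI[of _ m]) (simp add: field_simps)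
qed

lemma pair_transfer_QC_same_pair:
  assumes n: "3 \<le> n" and verts: "a \<in> QC_verts n" "b \<in> QC_verts n" "c \<in> QC_verts n" "d \<in> QC_verts n"
    and "a \<noteq> b" "c \<noteq> d" and chi: "cmod \<chi> = 1"
    and transfer: "\<And>x. x \<in> QC_verts n \<Longrightarrow>
      exp_evolve (QC_verts n) (laplacian (QC_verts n) Q_adj) \<tau> (pair_state a b) x = \<chi> * pair_state c d x"
  shows "{a, b} = {c, d}"
proof (cases "\<tau> = 0")
  case True
  then show ?thesis
    using transfer pair_state_proportional_imp_eq[OF verts(1,2) \<open>a \<noteq> b\<close> \<open>c \<noteq> d\<close>, of \<chi>]
    by (simp add: exp_evolve_0)
next
  case False
  then have "pi / \<tau> \<noteq> 0"
    by simp
  then have "exceptional_pair n a b"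
    using not_int_spaced_pair_support[OF n _ verts(1,2) \<open>a \<noteq> b\<close>]
      pair_transfer_int_spaced_support[OF n verts \<open>a \<noteq> b\<close> \<open>c \<noteq> d\<close> chi False transfer]
    by blast
  then show ?thesis
    using pair_transfer_sign[OF finite_QC_verts Q_adj_sym verts \<open>a \<noteq> b\<close> \<open>c \<noteq> d\<close> chi transfer
        cyc_mode_eigenvector[OF n]] verts(3,4) \<open>c \<noteq> d\<close>
    by (intro exceptional_pair_rigid) blast+
qed

theorem corollary3p3:
  fixes n :: nat
  assumes "n \<ge> 3"
  shows "\<not> (\<exists>a b c d.
            a \<in> Q_verts {0..<n} (cycle_adj n) \<and> b \<in> Q_verts {0..<n} (cycle_adj n) \<and>
            c \<in> Q_verts {0..<n} (cycle_adj n) \<and> d \<in> Q_verts {0..<n} (cycle_adj n) \<and>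
            a \<noteq> b \<and> c \<noteq> d \<and> {a, b} \<noteq> {c, d} \<and>
            lap_pair_PST (Q_verts {0..<n} (cycle_adj n)) Q_adj a b c d)"
proof (intro notI, elim exE conjE)
  fix a b c d
  assume verts: "a \<in> QC_verts n" "b \<in> QC_verts n" "c \<in> QC_verts n" "d \<in> QC_verts n"
    and "a \<noteq> b" "c \<noteq> d" "{a, b} \<noteq> {c, d}" and "lap_pair_PST (QC_verts n) Q_adj a b c d"
  then obtain \<tau> \<chi> where chi: "cmod \<chi> = 1" and transfer: "\<And>x. x \<in> QC_verts n \<Longrightarrow>
      exp_evolve (QC_verts n) (laplacian (QC_verts n) Q_adj) \<tau> (pair_state a b) x = \<chi> * pair_state c d x"
    unfolding lap_pair_PST_def by blast
  have "{a, b} = {c, d}"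
    by (rule pair_transfer_QC_same_pair[OF assms verts \<open>a \<noteq> b\<close> \<open>c \<noteq> d\<close> chi transfer])
  with \<open>{a, b} \<noteq> {c, d}\<close> show False ..
qed

end
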